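(* Let $I$ be a finite index set with $m \triangleq |I|$. For each $\alpha\in I$ let $X_\alpha$ be a Bernoulli random variable with $p_\alpha \triangleq \Pr(X_\alpha=1)=1-\Pr(X_\alpha=0)>0$ (the $X_\alpha$ may be dependent and non-identically distributed). Let $W\triangleq\sum_{\alpha\in I}X_\alpha$ and $\lambda\triangleq \mathbb{E}(W)=\sum_{\alpha\in I}p_\alpha$, assumed to lie in $(0,\infty)$. For every $\alpha\in I$ let $B_\alpha\subseteq I$ be a subset with $\alpha\in B_\alpha$, and define \[ b_1\triangleq\sum_{\alpha\in I}\sum_{\beta\in B_\alpha}p_\alpha p_\beta,\qquad b_2\triangleq\sum_{\alpha\in I}\sum_{\beta\in B_\alpha,\,\beta\neq\alpha}p_{\alpha,\beta},\quad p_{\alpha,\beta}\triangleq\mathbb{E}(X_\alpha X_\beta), \] \[ b_3\triangleq\sum_{\alpha\in I}s_\alpha,\qquad s_\alpha\triangleq\mathbb{E}\Bigl|\mathbb{E}\bigl(X_\alpha-p_\alpha \,\big|\, \sigma(\{X_\beta\}_{\beta\in I\setminus B_\alpha})\bigr)\Bigr|, \] where $\sigma(\{X_\beta\}_{\beta\in I\setminus B_\alpha})$ is the $\sigma$-algebra generated by the random variables $X_\beta$, $\beta\in I\setminus B_\alpha$. Define \[ a(\lambda)\triangleq 2\left[(b_1+b_2)\left(\frac{1-e^{-\lambda}}{\lambda}\right)+b_3\Bigl(1\wedge\frac{1.4}{\sqrt{\lambda}}\Bigr)\right], \] \[ b(\lambda)\triangleq\left[\Bigl(\lambda\log\bigl(\tfrac{e}{\lambda}\bigr)\Bigr)_+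 +\lambda^2+\frac{6\log(2\pi)+1}{12}\right]\exp\left\{-\left[\lambda+(m-1)\log\left(\frac{m-1}{\lambda e}\right)\right]\right\}, \] where $a\wedge b\triangleq\min\{a,b\}$ and $(x)_+\triangleq\max\{x,0\}$. Let $Z\sim\mathrm{Po}(\lambda)$ be a Poisson random variable with mean $\lambda$. If $a(\lambda)\le\frac12$ and $\lambda\le m-1$, then \[ |H(Z)-H(W)|\le a(\lambda)\log\left(\frac{m+2}{a(\lambda)}\right)+b(\lambda). \]
   Context: $H(\cdot)$ denotes Shannon entropy (of the probability mass function of an integer-valued random variable) computed with natural logarithms, i.e. in nats; $\log$ is the natural logarithm. *)

theory Defs
  imports "HOL-Probability.Probability"
begin

text \<open>Shannon entropy (in nats) of a probability mass function on the naturals,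
  with the convention 0 log 0 = 0 (automatic since ln 0 = 0 in Isabelle).\<close>
definition nat_entropy :: "(nat \<Rightarrow> real) \<Rightarrow> real" where
  "nat_entropy f = - (\<Sum>k. f k * ln (f k))"

definition poisson_pmf_fun :: "real \<Rightarrow> nat \<Rightarrow> real" where
  "poisson_pmf_fun lam k = exp (- lam) * lam ^ k / fact k"

definition gen_sigma :: "'a measure \<Rightarrow> 'i set \<Rightarrow> ('i \<Rightarrow> 'a \<Rightarrow> real) \<Rightarrow> 'a measure" where
  "gen_sigma M J X = sigma (space M) {X j -` A \<inter> space M | j A. j \<in> J \<and> A \<in> sets borel}"

end

theory Submission
  imports Defs
begin

text \<open>By the Chen--Stein method, the total variation distance between \<open>W\<close> and \<open>Po(\<lambda>)\<close>,
  together with the Poisson mass beyond \<open>m\<close>, is at most \<open>a(\<lambda>)\<close>: the solution \<open>g_A\<close> of the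
  Stein equation \<open>\<lambda> g(k+1) - k g(k) = 1_A(k) - Po(A)\<close> is bounded by \<open>1 \<and> 1.4 / sqrt \<lambda>\<close> and
  \<open>(1 - exp (-\<lambda>)) / \<lambda>\<close>-Lipschitz, and the expectation of the equation at \<open>W\<close> splits into
  contributions of the neighbourhoods \<open>B \<alpha>\<close>. Viewing both laws on the \<open>m + 2\<close> symbols
  \<open>0, \<dots>, m, {k. k > m}\<close>, the continuity bound for entropy turns this into
  \<open>a log ((m + 2) / a)\<close>, and splitting the Poisson tail into its individual atoms costs at most
  \<open>2 \<lambda> exp (- (\<lambda> + (m - 1) log ((m - 1) / (\<lambda> e))))\<close> by a Chernoff bound.\<close>

section \<open>The Poisson distribution\<close>

abbreviation pois :: "real \<Rightarrow> nat \<Rightarrow> real" where "pois \<equiv> poisson_pmf_fun"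

definition pois_cdf :: "real \<Rightarrow> nat \<Rightarrow> real" where
  "pois_cdf l k = (\<Sum>i\<le>k. pois l i)"

lemma pois_pos: "l > 0 \<Longrightarrow> pois l k > 0"
  unfolding poisson_pmf_fun_def by simp

lemma pois_0: "pois l 0 = exp (- l)"
  unfolding poisson_pmf_fun_def by simp

lemma pois_Suc: "pois l (Suc k) = l / real (Suc k) * pois l k"
  unfolding poisson_pmf_fun_def by (simp add: field_simps)

lemma Suc_mult_pois_Suc: "real (Suc k) * pois l (Suc k) = l * pois l k"
  unfolding pois_Suc by simp

lemma pois_sums: "pois l sums 1"
proof -
  have "(\<lambda>n. l ^ n / fact n) sums exp l"
    using exp_converges[of l] by (simp add: divide_inverse scaleR_conv_of_real mult.commute)
  from sums_mult[OF this, of "exp (- l)"] show ?thesis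
    unfolding poisson_pmf_fun_def by (simp add: exp_minus field_simps)
qed

lemma summable_pois: "summable (pois l)"
  using pois_sums by (rule sums_summable)

lemma sum_pois_le_1: "l > 0 \<Longrightarrow> finite S \<Longrightarrow> sum (pois l) S \<le> 1"
  using sum_le_suminf[OF summable_pois, of S l] pois_pos[of l] sums_unique[OF pois_sums, of l]
  by (simp add: less_imp_le)

lemma pois_le_1: "l > 0 \<Longrightarrow> pois l k \<le> 1"
  using sum_pois_le_1[of l "{k}"] by simp

lemma pois_cdf_nonneg: "l > 0 \<Longrightarrow> 0 \<le> pois_cdf l k"
  unfolding pois_cdf_def using pois_pos by (simp add: sum_nonneg less_imp_le)

lemma pois_cdf_le_1: "l > 0 \<Longrightarrow> pois_cdf l k \<le> 1"
  unfolding pois_cdf_def using sum_pois_le_1 by simp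

lemma pois_cdf_0: "pois_cdf l 0 = exp (- l)"
  unfolding pois_cdf_def by (simp add: pois_0)

lemma pois_cdf_Suc: "pois_cdf l (Suc k) = pois_cdf l k + pois l (Suc k)"
  unfolding pois_cdf_def by simp

lemma pois_tail_sums: "(\<lambda>i. pois l (i + Suc k)) sums (1 - pois_cdf l k)"
proof -
  have "(\<lambda>i. pois l (i + Suc k)) sums (1 - (\<Sum>i<Suc k. pois l i))"
    by (rule sums_split_initial_segment[OF pois_sums])
  then show ?thesis unfolding pois_cdf_def lessThan_Suc_atMost .
qed

lemma pois_tail_Suc_le:
  assumes l: "l > 0"
  shows "1 - pois_cdf l (Suc n) \<le> l / real (Suc (Suc n)) * (1 - pois_cdf l n)"
proof -
  have "pois l (i + Suc (Suc n)) \<le> l / real (Suc (Suc n)) * pois l (i + Suc n)" for i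
  proof -
    have "pois l (i + Suc (Suc n)) = l / real (Suc (i + Suc n)) * pois l (i + Suc n)"
      using pois_Suc[of l "i + Suc n"] by simp
    also have "\<dots> \<le> l / real (Suc (Suc n)) * pois l (i + Suc n)"
      using l pois_pos[OF l] by (intro mult_right_mono divide_left_mono) (auto simp: less_imp_le)
    finally show ?thesis .
  qed
  from sums_le[OF this pois_tail_sums sums_mult[OF pois_tail_sums]] show ?thesis .
qed

lemma pois_cdf_less_1:
  assumes "l > 0"
  shows "pois_cdf l k < 1"
proof -
  have "0 < (\<Sum>i. pois l (i + Suc k))"
    using suminf_pos[OF sums_summable[OF pois_tail_sums]] pois_pos[OF assms] .
  then show ?thesis using sums_unique[OF pois_tail_sums, of l k] by simp
qed

text \<open>The ratio \<open>pois l (i + 1) / pois l i = l / (i + 1)\<close> decreases in \<open>i\<close>, so both tails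
  are dominated by geometric series.\<close>

lemma pois_tail_le:
  assumes l: "l > 0" and k: "l < real k + 1"
  shows "1 - pois_cdf l k \<le> pois l k * (l / (real k + 1 - l))"
proof -
  define r where "r = l / (real k + 1)"
  have r: "0 < r" "r < 1" using l k by (auto simp: r_def field_simps)
  have dom: "pois l (i + Suc k) \<le> pois l k * r ^ Suc i" for i
  proof (induction i)
    case 0
    then show ?case by (simp add: pois_Suc r_def mult.commute add.commute)
  next
    case (Suc i)
    have "pois l (Suc i + Suc k) = l / real (Suc (i + Suc k)) * pois l (i + Suc k)"
      using pois_Suc by simp
    also have "\<dots> \<le> r * pois l (i + Suc k)"
      unfolding r_def using l pois_pos[of l]
      by (intro mult_right_mono divide_left_mono) (auto simp: less_imp_le)
    also have "\<dots> \<le> r * (pois l k * r ^ Suc i)"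
      using Suc r by (intro mult_left_mono) auto
    finally show ?case by (simp add: algebra_simps)
  qed
  have "(\<lambda>i. pois l k * r ^ Suc i) sums (pois l k * (r / (1 - r)))"
    using sums_mult[OF geometric_sums[of r], of "pois l k * r"] r by (simp add: field_simps)
  from sums_le[OF dom pois_tail_sums this]
  show ?thesis using k l by (simp add: r_def divide_simps)
qed

lemma pois_cdf_le:
  assumes l: "l > 0" and k: "real k < l"
  shows "pois_cdf l k \<le> pois l k * (l / (l - real k))"
  using k
proof (induction k)
  case 0
  then show ?case using l by (simp add: pois_cdf_0 pois_0)
next
  case (Suc k)
  have prev: "pois l k = real (Suc k) / l * pois l (Suc k)"
    using Suc_mult_pois_Suc[of k l] l by (simp add: field_simps)
  have "pois_cdf l (Suc k) \<le> pois l k * (l / (l - real k)) + pois l (Suc k)"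
    using Suc by (simp add: pois_cdf_Suc)
  also have "\<dots> = pois l (Suc k) * ((l + 1) / (l - real k))"
    using Suc.prems l unfolding prev by (simp add: field_simps)
  also have "\<dots> \<le> pois l (Suc k) * (l / (l - real (Suc k)))"
    using Suc.prems l pois_pos[OF l, of "Suc k"] by (intro mult_left_mono) (auto simp: field_simps)
  finally show ?case .
qed

lemma pois_cdf_ratio_mono:
  assumes l: "l > 0"
  shows "pois_cdf l k * pois l (Suc k) \<le> pois_cdf l (Suc k) * pois l k"
proof (cases "real (Suc k) \<le> l")
  case False
  then have "l * pois l k \<le> real (Suc k) * pois l k"
    using pois_pos[OF l, of k] by (intro mult_right_mono) auto
  then have "pois l (Suc k) \<le> pois l k"
    using l by (simp add: pois_Suc field_simps)
  then have "pois_cdf l k * pois l (Suc k) \<le> pois_cdf l k * pois l k"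
    using pois_cdf_nonneg[OF l] by (intro mult_left_mono) auto
  moreover have "0 \<le> pois l k * pois l (Suc k)"
    using pois_pos[OF l] by (simp add: less_imp_le)
  ultimately show ?thesis by (simp add: pois_cdf_Suc algebra_simps)
next
  case True
  define F p where "F = pois_cdf l k" and "p = pois l k"
  have p: "p > 0" and F: "0 \<le> F" using pois_pos[OF l] pois_cdf_nonneg[OF l] by (auto simp: F_def p_def)
  have "F \<le> p * (l / (l - real k))" unfolding F_def p_def using pois_cdf_le[OF l] True by simp
  then have "F * (p * ((l - (real k + 1)) / (real k + 1)))
      \<le> (p * (l / (l - real k))) * (p * ((l - (real k + 1)) / (real k + 1)))"
    using True p by (intro mult_right_mono) auto
  also have "\<dots> = (p * p) * (l / (real k + 1)) * ((l - (real k + 1)) / (l - real k))"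
    using True by (simp add: field_simps)
  also have "\<dots> \<le> (p * p) * (l / (real k + 1))"
    using True l p by (intro mult_right_le_one_le mult_nonneg_nonneg) auto
  finally have "F * (l / (real k + 1) * p) \<le> (F + l / (real k + 1) * p) * p"
    using True by (simp add: field_simps)
  then show ?thesis unfolding F_def p_def by (simp add: pois_cdf_Suc pois_Suc add.commute)
qed

lemma pois_tail_ratio_mono:
  assumes l: "l > 0"
  shows "(1 - pois_cdf l (Suc k)) * pois l k \<le> (1 - pois_cdf l k) * pois l (Suc k)"
proof (cases "real (Suc k) \<le> l")
  case True
  then have "real (Suc k) * pois l k \<le> l * pois l k"
    using pois_pos[OF l, of k] by (intro mult_right_mono) auto
  then have "pois l k \<le> pois l (Suc k)"
    using l by (simp add: pois_Suc field_simps)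
  then have "(1 - pois_cdf l (Suc k)) * pois l k \<le> (1 - pois_cdf l (Suc k)) * pois l (Suc k)"
    using pois_cdf_le_1[OF l] by (intro mult_left_mono) auto
  moreover have "0 \<le> pois l (Suc k) * pois l (Suc k)"
    using pois_pos[OF l] by (simp add: less_imp_le)
  moreover have "(1 - pois_cdf l k) * pois l (Suc k)
      = (1 - pois_cdf l (Suc k)) * pois l (Suc k) + pois l (Suc k) * pois l (Suc k)"
    by (simp add: pois_cdf_Suc algebra_simps)
  ultimately show ?thesis by linarith
next
  case False
  define T p where "T = 1 - pois_cdf l (Suc k)" and "p = pois l (Suc k)"
  have p: "p > 0" and T: "0 \<le> T" using pois_pos[OF l] pois_cdf_le_1[OF l] by (auto simp: T_def p_def)
  have "T \<le> p * (l / (real k + 2 - l))"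
    unfolding T_def p_def using pois_tail_le[OF l, of "Suc k"] False by (simp add: add.commute)
  then have "T * (p * ((real k + 1 - l) / l)) \<le> (p * (l / (real k + 2 - l))) * (p * ((real k + 1 - l) / l))"
    using False p l by (intro mult_right_mono) auto
  also have "\<dots> = (p * p) * ((real k + 1 - l) / (real k + 2 - l))"
    using l by simp
  also have "\<dots> \<le> p * p"
    using False by (intro mult_right_le_one_le) auto
  finally have "T * ((real k + 1) / l * p) \<le> (T + p) * p"
    using l by (simp add: field_simps)
  moreover have "pois l k = (real k + 1) / l * p"
    unfolding p_def using Suc_mult_pois_Suc[of k l] l by (simp add: field_simps)
  ultimately show ?thesis unfolding T_def p_def by (simp add: pois_cdf_Suc)
qed

section \<open>The solution of the Stein equation\<close>

definition stein_partial :: "real \<Rightarrow> nat set \<Rightarrow> nat \<Rightarrow> real" where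
  "stein_partial l A k = (\<Sum>i\<le>k. (indicator A i - sum (pois l) A) * pois l i)"

text \<open>\<open>stein_sol l A\<close> is the solution \<open>g_A\<close> of the Stein equation (\<open>stein_equation\<close>). Its
  value at \<open>0\<close> is irrelevant: it only ever appears multiplied by \<open>0\<close>.\<close>

definition stein_sol :: "real \<Rightarrow> nat set \<Rightarrow> nat \<Rightarrow> real" where
  "stein_sol l A k = (if k = 0 then 0 else stein_partial l A (k - 1) / (l * pois l (k - 1)))"

definition stein_diff :: "real \<Rightarrow> nat set \<Rightarrow> nat \<Rightarrow> real" where
  "stein_diff l A k = stein_sol l A (Suc k) - stein_sol l A k"

lemma stein_sol_Suc: "stein_sol l A (Suc k) = stein_partial l A k / (l * pois l k)"
  unfolding stein_sol_def by simp

lemma stein_partial_Suc: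
  "stein_partial l A (Suc k) = stein_partial l A k + (indicator A (Suc k) - sum (pois l) A) * pois l (Suc k)"
  unfolding stein_partial_def by simp

lemma stein_equation:
  assumes l: "l > 0"
  shows "l * stein_sol l A (Suc k) - real k * stein_sol l A k = indicator A k - sum (pois l) A"
proof (cases k)
  case 0
  then show ?thesis using pois_pos[OF l, of 0] l by (simp add: stein_sol_Suc stein_partial_def)
next
  case (Suc j)
  have p: "pois l j > 0" "pois l (Suc j) > 0" using pois_pos[OF l] by auto
  have "real k * stein_sol l A k = stein_partial l A j / pois l (Suc j)"
    unfolding Suc stein_sol_Suc Suc_mult_pois_Suc[symmetric] by simp
  moreover have "l * stein_sol l A (Suc k)
      = stein_partial l A j / pois l (Suc j) + (indicator A (Suc j) - sum (pois l) A)"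
    using Suc p l by (simp add: stein_sol_Suc stein_partial_Suc field_simps)
  ultimately show ?thesis using Suc by simp
qed

lemma stein_partial_eq:
  "stein_partial l A k = (\<Sum>i\<le>k. indicator A i * pois l i) - sum (pois l) A * pois_cdf l k"
  unfolding stein_partial_def pois_cdf_def by (simp add: algebra_simps sum_subtractf sum_distrib_left)

lemma stein_partial_singleton:
  "stein_partial l {j} k = pois l j * ((if j \<le> k then 1 else 0) - pois_cdf l k)"
proof -
  have "(\<Sum>i\<le>k. indicator {j} i * pois l i) = (if j \<le> k then pois l j else 0)"
    by (simp add: indicator_def sum.delta' if_distrib[of "\<lambda>x. x * _"] cong: if_cong)
  then show ?thesis unfolding stein_partial_eq by (simp add: algebra_simps)
qed

lemma stein_partial_sum:
  assumes "finite A"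
  shows "stein_partial l A k = (\<Sum>j\<in>A. stein_partial l {j} k)"
proof -
  have "(\<Sum>i\<le>k. indicator A i * pois l i) = (\<Sum>i\<in>A \<inter> {..k}. pois l i)"
    by (simp add: indicator_def if_distrib[of "\<lambda>x. x * _"] sum.If_cases Int_commute)
  also have "\<dots> = (\<Sum>j\<in>A. if j \<le> k then pois l j else 0)"
    using assms by (simp add: sum.If_cases Int_def conj_commute)
  finally have "stein_partial l A k
      = (\<Sum>j\<in>A. if j \<le> k then pois l j else 0) - sum (pois l) A * pois_cdf l k"
    unfolding stein_partial_eq by simp
  then show ?thesis
    unfolding stein_partial_singleton
    by (simp add: algebra_simps sum_subtractf sum_distrib_right sum_distrib_left
        if_distrib[of "\<lambda>x. _ * x"] mult.commute cong: if_cong)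
qed

lemma stein_sol_sum: "finite A \<Longrightarrow> stein_sol l A k = (\<Sum>j\<in>A. stein_sol l {j} k)"
  unfolding stein_sol_def using stein_partial_sum[of A l] by (simp add: sum_divide_distrib)

lemma stein_diff_sum: "finite A \<Longrightarrow> stein_diff l A k = (\<Sum>j\<in>A. stein_diff l {j} k)"
  unfolding stein_diff_def using stein_sol_sum[of A l] by (simp add: sum_subtractf)

lemma stein_diff_Suc:
  "stein_diff l A (Suc n) = stein_partial l A (Suc n) / (l * pois l (Suc n)) - stein_partial l A n / (l * pois l n)"
  unfolding stein_diff_def stein_sol_Suc by simp

text \<open>The increments of \<open>g_{{j}}\<close> are nonpositive except on the diagonal: this sign pattern,
  read off from the two monotone ratios above, is what gives the Lipschitz constant
  \<open>(1 - exp (-l)) / l\<close> for every \<open>g_A\<close>.\<close>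

lemma stein_diff_singleton_nonpos:
  assumes l: "l > 0" and j: "j \<noteq> Suc n"
  shows "stein_diff l {j} (Suc n) \<le> 0"
proof -
  have p: "pois l n > 0" "pois l (Suc n) > 0" "pois l j > 0" using pois_pos[OF l] by auto
  show ?thesis
  proof (cases "j > Suc n")
    case True
    have "stein_diff l {j} (Suc n)
        = pois l j / l * (pois_cdf l n / pois l n - pois_cdf l (Suc n) / pois l (Suc n))"
      unfolding stein_diff_Suc stein_partial_singleton using True l p by (simp add: field_simps)
    moreover have "pois_cdf l n / pois l n - pois_cdf l (Suc n) / pois l (Suc n) \<le> 0"
      using pois_cdf_ratio_mono[OF l, of n] p by (simp add: field_simps)
    ultimately show ?thesis using p l by (metis divide_pos_pos less_imp_le mult_nonneg_nonpos diff_le_0_iff_le)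
  next
    case False
    then have "j \<le> n" using j by simp
    then have "stein_diff l {j} (Suc n)
        = pois l j / l * ((1 - pois_cdf l (Suc n)) / pois l (Suc n) - (1 - pois_cdf l n) / pois l n)"
      unfolding stein_diff_Suc stein_partial_singleton using l p by (simp add: field_simps)
    moreover have "(1 - pois_cdf l (Suc n)) / pois l (Suc n) - (1 - pois_cdf l n) / pois l n \<le> 0"
      using pois_tail_ratio_mono[OF l, of n] p by (simp add: field_simps)
    ultimately show ?thesis using p l by (metis divide_pos_pos less_imp_le mult_nonneg_nonpos)
  qed
qed

lemma mult_pois_cdf_le:
  assumes l: "l > 0"
  shows "l / (real n + 1) * pois_cdf l n \<le> pois_cdf l (Suc n) - pois l 0"
proof -
  have "l / (real n + 1) * pois_cdf l n = (\<Sum>i\<le>n. l / (real n + 1) * pois l i)"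
    unfolding pois_cdf_def by (simp add: sum_distrib_left)
  also have "\<dots> \<le> (\<Sum>i\<le>n. pois l (Suc i))"
  proof (rule sum_mono)
    fix i assume "i \<in> {..n}"
    then have "l / (real n + 1) * pois l i \<le> l / (real i + 1) * pois l i"
      using l pois_pos[OF l, of i] by (intro mult_right_mono divide_left_mono) auto
    then show "l / (real n + 1) * pois l i \<le> pois l (Suc i)" by (simp add: pois_Suc add.commute)
  qed
  also have "\<dots> = pois_cdf l (Suc n) - pois l 0"
    unfolding pois_cdf_def sum.atMost_Suc_shift by simp
  finally show ?thesis .
qed

lemma stein_diff_diagonal:
  assumes l: "l > 0"
  shows "0 \<le> stein_diff l {Suc n} (Suc n)" "stein_diff l {Suc n} (Suc n) \<le> (1 - exp (- l)) / l"
proof -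
  have p: "pois l n > 0" "pois l (Suc n) > 0" using pois_pos[OF l] by auto
  have "stein_diff l {Suc n} (Suc n)
      = (1 - pois_cdf l (Suc n)) / l + (pois l (Suc n) / pois l n) * pois_cdf l n / l"
    unfolding stein_diff_Suc stein_partial_singleton using p l by (simp add: field_simps)
  also have "pois l (Suc n) / pois l n = l / (real n + 1)" using p by (simp add: pois_Suc)
  finally have D: "stein_diff l {Suc n} (Suc n) = ((1 - pois_cdf l (Suc n)) + l / (real n + 1) * pois_cdf l n) / l"
    by (simp add: add_divide_distrib)
  show "0 \<le> stein_diff l {Suc n} (Suc n)"
    unfolding D using pois_cdf_le_1[OF l] pois_cdf_nonneg[OF l] l by simp
  have "(1 - pois_cdf l (Suc n)) + l / (real n + 1) * pois_cdf l n \<le> 1 - exp (- l)"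
    using mult_pois_cdf_le[OF l, of n] by (simp add: pois_0)
  then show "stein_diff l {Suc n} (Suc n) \<le> (1 - exp (- l)) / l"
    unfolding D using l by (simp add: divide_right_mono)
qed

lemma stein_diff_atMost_nonneg:
  assumes l: "l > 0" and "Suc n \<le> N"
  shows "0 \<le> stein_diff l {..N} (Suc n)"
proof -
  have p: "pois l n > 0" "pois l (Suc n) > 0" using pois_pos[OF l] by auto
  have S: "stein_partial l {..N} x = (1 - pois_cdf l N) * pois_cdf l x" if "x \<le> N" for x
  proof -
    have "stein_partial l {..N} x = (\<Sum>i\<le>x. (1 - pois_cdf l N) * pois l i)"
      unfolding stein_partial_def pois_cdf_def by (rule sum.cong) (use that in auto)
    then show ?thesis by (simp add: sum_distrib_left pois_cdf_def)
  qed
  have "stein_diff l {..N} (Suc n) = (1 - pois_cdf l N) / l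
      * (pois_cdf l (Suc n) / pois l (Suc n) - pois_cdf l n / pois l n)"
    unfolding stein_diff_Suc S[OF \<open>Suc n \<le> N\<close>] S[OF Suc_leD[OF \<open>Suc n \<le> N\<close>]] using assms p by (simp add: field_simps)
  moreover have "0 \<le> pois_cdf l (Suc n) / pois l (Suc n) - pois_cdf l n / pois l n"
    using pois_cdf_ratio_mono[OF l, of n] p by (simp add: field_simps)
  moreover have "0 \<le> (1 - pois_cdf l N) / l" using pois_cdf_le_1[OF l] l by simp
  ultimately show ?thesis by (metis mult_nonneg_nonneg)
qed

lemma abs_stein_diff_le:
  assumes l: "l > 0" and A: "A \<subseteq> {..N}" and k: "1 \<le> k" "k \<le> N"
  shows "\<bar>stein_diff l A k\<bar> \<le> (1 - exp (- l)) / l"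
proof -
  obtain n where kn: "k = Suc n" using k by (cases k) auto
  let ?d = "\<lambda>j. stein_diff l {j} k"
  have fA: "finite A" using A finite_subset by blast
  have off: "?d j \<le> 0" if "j \<noteq> k" for j using stein_diff_singleton_nonpos[OF l] kn that by blast
  have diag: "0 \<le> ?d k" "?d k \<le> (1 - exp (- l)) / l" using stein_diff_diagonal[OF l] kn by auto
  have split: "stein_diff l S k = (\<Sum>j\<in>S \<inter> {k}. ?d j) + (\<Sum>j\<in>S - {k}. ?d j)" if "finite S" for S
    unfolding stein_diff_sum[OF that] using that by (metis Diff_eq sum.Int_Diff)
  have A_diag: "0 \<le> (\<Sum>j\<in>A \<inter> {k}. ?d j)" "(\<Sum>j\<in>A \<inter> {k}. ?d j) \<le> ?d k"
    using diag by (cases "k \<in> A"; simp add: Int_insert_right)+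
  have A_off: "(\<Sum>j\<in>{..N} - {k}. ?d j) \<le> (\<Sum>j\<in>A - {k}. ?d j)" "(\<Sum>j\<in>A - {k}. ?d j) \<le> 0"
  proof -
    have "(\<Sum>j\<in>A - {k}. - ?d j) \<le> (\<Sum>j\<in>{..N} - {k}. - ?d j)"
      using A off by (intro sum_mono2) auto
    then show "(\<Sum>j\<in>{..N} - {k}. ?d j) \<le> (\<Sum>j\<in>A - {k}. ?d j)" by (simp add: sum_negf)
    show "(\<Sum>j\<in>A - {k}. ?d j) \<le> 0" using off by (intro sum_nonpos) auto
  qed
  have "0 \<le> stein_diff l {..N} k" using stein_diff_atMost_nonneg[OF l] k kn by simp
  moreover have "(\<Sum>j\<in>{..N} \<inter> {k}. ?d j) = ?d k" using k by simp
  ultimately show ?thesis using split[OF fA] split[of "{..N}"] A_diag A_off diag by simp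
qed

lemma stein_sol_lipschitz:
  assumes l: "l > 0" and A: "A \<subseteq> {..N}" and "1 \<le> i" "i \<le> j"
  shows "\<bar>stein_sol l A j - stein_sol l A i\<bar> \<le> (1 - exp (- l)) / l * real (j - i)"
  using \<open>i \<le> j\<close>
proof (induction j rule: dec_induct)
  case base
  then show ?case by simp
next
  case (step n)
  have "A \<subseteq> {..max N n}" using A by auto
  from abs_stein_diff_le[OF l this, of n]
  have "\<bar>stein_sol l A (Suc n) - stein_sol l A n\<bar> \<le> (1 - exp (- l)) / l"
    using assms(3) step.hyps(1) unfolding stein_diff_def by simp
  then show ?case using step.IH step.hyps by (simp add: Suc_diff_le distrib_left)
qed

lemma abs_stein_partial_le:
  assumes l: "l > 0" and fA: "finite A"
  shows "\<bar>stein_partial l A k\<bar> \<le> pois_cdf l k * (1 - pois_cdf l k)"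
proof -
  define F where "F = pois_cdf l k"
  define x where "x = sum (pois l) (A \<inter> {..k})"
  define y where "y = sum (pois l) (A - {..k})"
  have pn: "\<And>i. 0 \<le> pois l i" using pois_pos[OF l] less_imp_le by blast
  have "(\<Sum>i\<le>k. indicator A i * pois l i) = x"
    unfolding x_def by (simp add: indicator_def if_distrib[of "\<lambda>x. x * _"] sum.If_cases Int_commute)
  moreover have "sum (pois l) A = x + y"
    unfolding x_def y_def using fA by (subst sum.union_disjoint[symmetric]) (auto intro: sum.cong)
  ultimately have S: "stein_partial l A k = x * (1 - F) - y * F"
    unfolding stein_partial_eq F_def by (simp add: algebra_simps)
  have x: "0 \<le> x" "x \<le> F" unfolding x_def F_def pois_cdf_def using pn by (auto intro: sum_nonneg sum_mono2)
  have "y + F = sum (pois l) ((A - {..k}) \<union> {..k})"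
    unfolding y_def F_def pois_cdf_def using fA by (subst sum.union_disjoint) auto
  also have "\<dots> \<le> 1" using fA by (intro sum_pois_le_1[OF l]) auto
  finally have y: "0 \<le> y" "y \<le> 1 - F" unfolding y_def using pn by (auto intro: sum_nonneg)
  have F: "0 \<le> F" "F \<le> 1" unfolding F_def using pois_cdf_nonneg[OF l] pois_cdf_le_1[OF l] by auto
  have "0 \<le> x * (1 - F)" "x * (1 - F) \<le> F * (1 - F)" "0 \<le> y * F" "y * F \<le> (1 - F) * F"
    using x y F by (auto intro: mult_right_mono)
  then show ?thesis unfolding S F_def[symmetric] by (simp add: abs_le_iff algebra_simps)
qed

lemma mult_one_minus_le_quarter: "(x::real) * (1 - x) \<le> 1/4"
proof -
  have "0 \<le> (x - 1/2)^2" by simp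
  then show ?thesis by (simp add: power2_eq_square algebra_simps)
qed

lemma exp_le_four_mult_square:
  assumes "1 \<le> (l::real)" "l \<le> 2"
  shows "exp l \<le> 4 * l^2"
proof -
  have exp_1_plus: "exp (1 + x) \<le> 272/100 * (1 + x + x^2)" if "0 \<le> x" "x \<le> 1" for x :: real
    unfolding exp_add using e_less_272 exp_bound[OF that] by (intro mult_mono) auto
  consider "l \<le> 6/5" | "6/5 \<le> l" "l \<le> 3/2" | "3/2 \<le> l" using assms by linarith
  then show ?thesis
  proof cases
    case 1
    have "exp l \<le> exp (1 + 1/5)" using 1 by simp
    also have "\<dots> \<le> 272/100 * (1 + 1/5 + (1/5)^2)" by (rule exp_1_plus) auto
    also have "\<dots> \<le> 4 * 1^2" by (simp add: power2_eq_square)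
    also have "\<dots> \<le> 4 * l^2" using assms by simp
    finally show ?thesis .
  next
    case 2
    have "exp l \<le> exp (1 + 1/2)" using 2 by simp
    also have "\<dots> \<le> 272/100 * (1 + 1/2 + (1/2)^2)" by (rule exp_1_plus) auto
    also have "\<dots> \<le> 4 * (6/5)^2" by (simp add: power2_eq_square)
    also have "\<dots> \<le> 4 * l^2" using 2 by (intro mult_left_mono power_mono) auto
    finally show ?thesis .
  next
    case 3
    have "exp l \<le> exp (1 + 1)" using assms by simp
    also have "\<dots> \<le> 272/100 * (1 + 1 + 1^2)" by (rule exp_1_plus) auto
    also have "\<dots> \<le> 4 * (3/2)^2" by (simp add: power2_eq_square)
    also have "\<dots> \<le> 4 * l^2" using 3 by (intro mult_left_mono power_mono) auto
    finally show ?thesis .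
  qed
qed

lemma pois_cdf_mult_one_minus_le_small:
  assumes l: "l > 0" "l \<le> 2"
  shows "pois_cdf l k * (1 - pois_cdf l k) \<le> l * pois l k"
proof -
  have F: "0 \<le> pois_cdf l k" "pois_cdf l k \<le> 1" using pois_cdf_nonneg[OF l(1)] pois_cdf_le_1[OF l(1)] by auto
  consider "k = 0" | "real k \<ge> l" | "k = 1" "1 < l" using l by (cases k) (auto, linarith)
  then show ?thesis
  proof cases
    case 1
    have "1 - exp (- l) \<le> l" using exp_ge_add_one_self[of "- l"] by simp
    then show ?thesis using 1 by (simp add: pois_cdf_0 pois_0 mult.commute mult_left_mono)
  next
    case 2
    have "1 - pois_cdf l k \<le> pois l k * (l / (real k + 1 - l))" using pois_tail_le[OF l(1)] 2 by simp
    also have "\<dots> \<le> pois l k * l"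
      using 2 l pois_pos[OF l(1), of k]
      by (intro mult_left_mono) (auto simp: divide_le_eq mult_le_cancel_left1)
    finally have "1 - pois_cdf l k \<le> l * pois l k" by (simp add: mult.commute)
    moreover have "pois_cdf l k * (1 - pois_cdf l k) \<le> 1 - pois_cdf l k" using F by (simp add: mult_left_le_one_le)
    ultimately show ?thesis by linarith
  next
    case 3
    have "exp l \<le> 4 * l^2" using exp_le_four_mult_square 3 l by simp
    then have "1/4 \<le> l * pois l 1" unfolding poisson_pmf_fun_def
      by (simp add: exp_minus field_simps power2_eq_square)
    then show ?thesis using mult_one_minus_le_quarter[of "pois_cdf l k"] 3 by simp
  qed
qed

lemma ln_add_one_ge:
  assumes x: "0 \<le> (x::real)"
  shows "2 * x / (2 + x) \<le> ln (1 + x)"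
proof -
  let ?f = "\<lambda>t::real. ln (1 + t) - 2 * t / (2 + t)"
  have "?f 0 \<le> ?f x"
  proof (rule DERIV_nonneg_imp_nondecreasing[OF x])
    fix t :: real assume t: "0 \<le> t" "t \<le> x"
    have "(?f has_real_derivative (1 / (1 + t) - 4 / (2 + t)^2)) (at t)"
      using t by (auto intro!: derivative_eq_intros) (simp add: divide_simps power2_eq_square)
    moreover have "1 / (1 + t) - 4 / (2 + t)^2 = t^2 / ((1 + t) * (2 + t)^2)"
      using t by (simp add: divide_simps power2_eq_square) algebra
    ultimately show "\<exists>y. (?f has_real_derivative y) (at t) \<and> 0 \<le> y" using t by fastforce
  qed
  then show ?thesis by simp
qed

lemma ln_fact_le:
  assumes "1 \<le> k"
  shows "ln (fact k) \<le> 1 + (real k + 1/2) * ln (real k) - real k"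
  using assms
proof (induction k rule: dec_induct)
  case base
  then show ?case by simp
next
  case (step k)
  have k: "real k \<ge> 1" using step by simp
  have "(real k + 1/2) * (2 * (1 / real k) / (2 + 1 / real k))
      \<le> (real k + 1/2) * ln (1 + 1 / real k)"
    using k by (intro mult_left_mono ln_add_one_ge) auto
  moreover have "(real k + 1/2) * (2 * (1 / real k) / (2 + 1 / real k)) = 1"
    using k by (simp add: field_simps)
  moreover have "ln (1 + 1 / real k) = ln (real k + 1) - ln (real k)"
  proof -
    have "1 + 1 / real k = (real k + 1) / real k" using k by (simp add: field_simps)
    then show ?thesis using k by (simp add: ln_div)
  qed
  ultimately have "1 \<le> (real k + 1/2) * (ln (real k + 1) - ln (real k))" by simp
  moreover have "ln (fact (Suc k)) = ln (real k + 1) + ln (fact k)"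
    by (simp add: ln_mult add.commute)
  ultimately show ?case using step.IH by (simp add: algebra_simps)
qed

lemma ln_pois_ge:
  assumes l: "l > 0" and k: "1 \<le> k"
  shows "- ((real k - l)^2 / l) - 1 - ln (real k) / 2 \<le> ln (pois l k)"
proof -
  have kr: "real k > 0" using k by simp
  have "ln (real k / l) \<le> real k / l - 1" using ln_le_minus_one[of "real k / l"] kr l by simp
  then have "real k * (1 - real k / l) \<le> real k * (ln l - ln (real k))"
    using kr l by (intro mult_left_mono) (auto simp: ln_div)
  moreover have "ln (pois l k) = - l + real k * ln l - ln (fact k)"
    unfolding poisson_pmf_fun_def using l by (simp add: ln_mult ln_div ln_realpow)
  moreover have "- ((real k - l)^2 / l) = real k * (1 - real k / l) + real k - l"
    using l by (simp add: field_simps power2_eq_square)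
  ultimately show ?thesis using ln_fact_le[OF k] by (simp add: algebra_simps)
qed

lemma ln_28_div_5_ge: "1 + 25/49 + 13/200 \<le> ln (28/5::real)"
proof -
  have "exp (1 + 25/49 + 13/200 :: real) = exp 1 * exp (25/49 + 13/200)"
    by (simp add: exp_add[symmetric])
  also have "\<dots> \<le> 272/100 * (1 + (25/49 + 13/200) + (25/49 + 13/200)^2)"
    using e_less_272 exp_bound[of "25/49 + 13/200"] by (intro mult_mono) auto
  also have "\<dots> \<le> 28/5" by (simp add: power2_eq_square)
  finally have "ln (exp (1 + 25/49 + 13/200 :: real)) \<le> ln (28/5)"
    by (subst ln_le_cancel_iff) auto
  then show ?thesis by simp
qed

text \<open>The local Stirling estimate behind the constant \<open>1.4\<close>.\<close>

lemma pois_near_mean_ge: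
  assumes l: "1.96 \<le> l"
    and k: "l - real k < 5/7 * sqrt l" "real k + 1 - l < 5/7 * sqrt l"
  shows "1/4 \<le> 7/5 * sqrt l * pois l k"
proof -
  define s where "s = sqrt l"
  have l0: "l > 0" using l by simp
  have ss: "s * s = l" "s > 0" unfolding s_def using l0 by auto
  have "sqrt ((7/5)^2) \<le> sqrt l" using l by (intro real_sqrt_le_mono) (simp add: power2_eq_square)
  then have s14: "7/5 \<le> s" unfolding s_def by simp
  have p: "pois l k > 0" using pois_pos[OF l0] .
  have "0 < s * (s - 5/7)" using ss s14 by simp
  then have "real k > 0" using k ss unfolding s_def[symmetric] by (simp add: algebra_simps)
  then have k1: "1 \<le> k" by simp
  have "\<bar>real k - l\<bar> \<le> 5/7 * s" using k unfolding s_def by linarith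
  then have "\<bar>real k - l\<bar>^2 \<le> (5/7 * s)^2" by (intro power_mono) auto
  then have sq: "(real k - l)^2 / l \<le> 25/49" using ss l0 by (simp add: power2_eq_square divide_le_eq)
  have "0 \<le> 13/100 * (s - 250/91)^2" by simp
  then have "real k \<le> 113/100 * l"
    using k ss unfolding s_def[symmetric] by (simp add: power2_eq_square algebra_simps)
  then have "real k / l - 1 \<le> 13/100" using l0 by (simp add: field_simps)
  moreover have "ln (real k) - ln l \<le> real k / l - 1"
    using ln_le_minus_one[of "real k / l"] \<open>real k > 0\<close> l0 by (simp add: ln_div)
  ultimately have lnk: "ln (real k) - ln l \<le> 13/100" by linarith
  have "ln (7/5 * s * pois l k) = ln (7/5) + ln s + ln (pois l k)"
    using ss p ln_mult_pos[of "7/5 * s" "pois l k"] ln_mult_pos[of "7/5" s] by simp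
  also have "ln s = ln l / 2" unfolding s_def using l0 by (simp add: ln_sqrt)
  finally have "ln (7/5 * s * pois l k) = ln (7/5) + ln l / 2 + ln (pois l k)" .
  moreover have "ln (28/5) = ln (7/5) + ln (4::real)" using ln_mult_pos[of "7/5" "4::real"] by simp
  moreover have "ln (1/4) = - ln (4::real)" by (simp add: ln_div)
  ultimately have "ln (1/4) \<le> ln (7/5 * s * pois l k)"
    using ln_28_div_5_ge ln_pois_ge[OF l0 k1] sq lnk by (simp add: algebra_simps)
  then show ?thesis using ss p unfolding s_def by (subst (asm) ln_le_cancel_iff) auto
qed

lemma pois_cdf_mult_one_minus_le_large:
  assumes l: "1.96 \<le> l"
  shows "pois_cdf l k * (1 - pois_cdf l k) \<le> 7/5 * sqrt l * pois l k"
proof -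
  define s where "s = sqrt l"
  have l0: "l > 0" using l by simp
  have ss: "s * s = l" "s > 0" unfolding s_def using l0 by auto
  have F: "0 \<le> pois_cdf l k" "pois_cdf l k \<le> 1" using pois_cdf_nonneg[OF l0] pois_cdf_le_1[OF l0] by auto
  have p: "pois l k > 0" using pois_pos[OF l0] .
  have ratio: "pois l k * (l / d) \<le> 7/5 * s * pois l k" if "5/7 * s \<le> d" for d
  proof -
    have "pois l k * (l / d) \<le> pois l k * (l / (5/7 * s))"
      using that p l0 ss by (intro mult_left_mono divide_left_mono) auto
    also have "\<dots> = 7/5 * s * pois l k" using ss by (simp add: field_simps)
    finally show ?thesis .
  qed
  consider "5/7 * s \<le> l - real k" | "5/7 * s \<le> real k + 1 - l"
    | "l - real k < 5/7 * s" "real k + 1 - l < 5/7 * s"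
    by linarith
  then show ?thesis
  proof cases
    case 1
    then have "real k < l" using ss by simp
    from order_trans[OF pois_cdf_le[OF l0 this] ratio[OF 1]]
    have "pois_cdf l k \<le> 7/5 * s * pois l k" .
    moreover have "pois_cdf l k * (1 - pois_cdf l k) \<le> pois_cdf l k" using F by (simp add: mult_right_le_one_le)
    ultimately show ?thesis unfolding s_def by linarith
  next
    case 2
    then have "l < real k + 1" using ss by simp
    from order_trans[OF pois_tail_le[OF l0 this] ratio[OF 2]]
    have "1 - pois_cdf l k \<le> 7/5 * s * pois l k" .
    moreover have "pois_cdf l k * (1 - pois_cdf l k) \<le> 1 - pois_cdf l k" using F by (simp add: mult_left_le_one_le)
    ultimately show ?thesis unfolding s_def by linarith
  next
    case 3
    then show ?thesis
      using pois_near_mean_ge[OF l] mult_one_minus_le_quarter[of "pois_cdf l k"] unfolding s_def by fastforce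
  qed
qed

lemma abs_stein_sol_le:
  assumes l: "l > 0" and fA: "finite A"
  shows "\<bar>stein_sol l A k\<bar> \<le> min 1 (1.4 / sqrt l)"
proof (cases k)
  case 0
  then show ?thesis using l by (simp add: stein_sol_def)
next
  case (Suc n)
  have p: "pois l n > 0" using pois_pos[OF l] .
  have g: "\<bar>stein_sol l A k\<bar> = \<bar>stein_partial l A n\<bar> / (l * pois l n)"
    unfolding Suc stein_sol_Suc using l p by (simp add: abs_divide)
  note S = abs_stein_partial_le[OF l fA, of n]
  show ?thesis
  proof (cases "l \<le> 1.96")
    case True
    have "sqrt l \<le> sqrt ((7/5)^2)" using True by (intro real_sqrt_le_mono) (simp add: power2_eq_square)
    then have "sqrt l \<le> 1.4" by simp
    then have "min 1 (1.4 / sqrt l) = 1" using l by (simp add: min_def field_simps)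
    moreover have "\<bar>stein_partial l A n\<bar> \<le> l * pois l n"
      using S pois_cdf_mult_one_minus_le_small[OF l, of n] True by simp
    ultimately show ?thesis unfolding g using l p by (simp add: divide_le_eq)
  next
    case False
    have "sqrt ((7/5)^2) \<le> sqrt l" using False by (intro real_sqrt_le_mono) (simp add: power2_eq_square)
    then have "1.4 \<le> sqrt l" by simp
    then have m: "min 1 (1.4 / sqrt l) = 1.4 / sqrt l" using l by (simp add: min_def field_simps)
    have "\<bar>stein_partial l A n\<bar> \<le> 7/5 * sqrt l * pois l n"
      using S pois_cdf_mult_one_minus_le_large[of l n] False by simp
    also have "7/5 * sqrt l * pois l n = (1.4 / sqrt l) * (l * pois l n)"
      using l real_div_sqrt[of l] by (simp add: field_simps)
    finally show ?thesis unfolding g m using l p by (simp add: divide_le_eq)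
  qed
qed

section \<open>Continuity of entropy\<close>

definition entr :: "real \<Rightarrow> real" where
  "entr t = - (t * ln t)"

lemma entr_0 [simp]: "entr 0 = 0" and entr_1 [simp]: "entr 1 = 0"
  unfolding entr_def by simp_all

lemma entr_nonneg: "0 \<le> t \<Longrightarrow> t \<le> 1 \<Longrightarrow> 0 \<le> entr t"
  unfolding entr_def by (cases "t = 0") (auto simp: mult_nonneg_nonpos)

lemma entr_add_le:
  assumes "0 \<le> x" "0 \<le> r"
  shows "entr (x + r) \<le> entr x + entr r"
proof (cases "x = 0 \<or> r = 0")
  case True
  then show ?thesis by auto
next
  case False
  then have "0 < x" "0 < r" using assms by auto
  then have "x * ln x \<le> x * ln (x + r)" "r * ln r \<le> r * ln (x + r)"
    by (auto intro: mult_left_mono)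
  then show ?thesis unfolding entr_def by (simp add: algebra_simps)
qed

lemma entr_one_minus_le:
  assumes "0 \<le> r" "r \<le> 1/2"
  shows "entr (1 - r) \<le> r"
proof -
  have "ln (1 / (1 - r)) \<le> 1 / (1 - r) - 1" using assms by (intro ln_le_minus_one) auto
  then have "- ln (1 - r) \<le> r / (1 - r)" using assms by (simp add: ln_div field_simps)
  then have "(1 - r) * (- ln (1 - r)) \<le> (1 - r) * (r / (1 - r))" using assms by (intro mult_left_mono) auto
  then show ?thesis unfolding entr_def using assms by simp
qed

lemma entr_one_minus_le_entr:
  assumes r: "0 \<le> r" "r \<le> 1/2"
  shows "entr (1 - r) \<le> entr r"
proof (cases "r \<le> exp (- 1)")
  case True
  show ?thesis
  proof (cases "r = 0")
    case False
    then have "0 < r" using r by simp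
    moreover have "ln r \<le> ln (exp (- 1))" using True \<open>0 < r\<close> by (subst ln_le_cancel_iff) auto
    ultimately have "r \<le> entr r" unfolding entr_def
      using mult_left_mono[of 1 "- ln r" r] by simp
    then show ?thesis using entr_one_minus_le[OF r] by simp
  qed simp
next
  case False
  let ?u = "\<lambda>t. entr t - entr (1 - t)"
  have "?u (1/2) \<le> ?u r"
  proof (rule DERIV_nonpos_imp_nonincreasing[OF r(2)])
    fix t :: real assume t: "r \<le> t" "t \<le> 1/2"
    have t0: "0 < t" "t < 1" using t False exp_gt_zero[of "-1::real"] by linarith+
    have "(?u has_real_derivative (- (ln t + 1) - (ln (1 - t) + 1))) (at t)"
      unfolding entr_def using t0 by (auto intro!: derivative_eq_intros)
    moreover have "exp (- 2) \<le> t * (1 - t)"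
    proof -
      have "exp (- 1) \<le> (1/2::real)"
        using exp_ge_add_one_self[of 1] by (simp add: exp_minus field_simps)
      then have "exp (- 1) * exp (- 1) \<le> exp (- 1) * (1/2::real)" by (intro mult_left_mono) auto
      also have "\<dots> \<le> t * (1 - t)" using t False t0 by (intro mult_mono) auto
      finally show ?thesis by (simp add: exp_add[symmetric])
    qed
    then have "- 2 \<le> ln (t * (1 - t))" using t0 by (subst ln_ge_iff) auto
    then have "- 2 \<le> ln t + ln (1 - t)" using t0 by (simp add: ln_mult_pos)
    ultimately show "\<exists>y. (?u has_real_derivative y) (at t) \<and> y \<le> 0" by auto
  qed
  then show ?thesis by simp
qed

lemma entr_diff_le:
  assumes x: "0 \<le> x" and r: "0 \<le> r" "r \<le> 1/2" and xr: "x + r \<le> 1"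
  shows "entr x - entr (x + r) \<le> entr r"
proof (cases "x = 0")
  case True
  then show ?thesis using entr_nonneg[of r] r by simp
next
  case False
  let ?f = "\<lambda>t. entr t - entr (t + r)"
  have "?f x \<le> ?f (1 - r)"
  proof (rule DERIV_nonneg_imp_nondecreasing[of x "1 - r" ?f])
    show "x \<le> 1 - r" using xr by simp
    fix t assume t: "x \<le> t" "t \<le> 1 - r"
    have t0: "0 < t" "0 < t + r" using t x False r by auto
    have "(?f has_real_derivative (- (ln t + 1) + (ln (t + r) + 1))) (at t)"
      unfolding entr_def using t0 by (auto intro!: derivative_eq_intros)
    moreover have "0 \<le> - (ln t + 1) + (ln (t + r) + 1)" using t0 r by simp
    ultimately show "\<exists>y. (?f has_real_derivative y) (at t) \<and> 0 \<le> y" by blast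
  qed
  also have "?f (1 - r) = entr (1 - r)" by simp
  also have "\<dots> \<le> entr r" using entr_one_minus_le_entr r by simp
  finally show ?thesis .
qed

lemma abs_entr_diff_le:
  assumes "0 \<le> x" "x \<le> 1" "0 \<le> y" "y \<le> 1" "\<bar>x - y\<bar> \<le> 1/2"
  shows "\<bar>entr x - entr y\<bar> \<le> entr \<bar>x - y\<bar>"
proof -
  have *: "\<bar>entr u - entr (u + r)\<bar> \<le> entr r" if "0 \<le> u" "0 \<le> r" "r \<le> 1/2" "u + r \<le> 1" for u r
    using entr_add_le[of u r] entr_diff_le[of u r] that by (simp add: abs_le_iff)
  show ?thesis
  proof (cases "x \<le> y")
    case True
    then show ?thesis using *[of x "y - x"] assms by (simp add: abs_minus_commute)
  next
    case False
    then show ?thesis using *[of y "x - y"] assms by (simp add: abs_minus_commute)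
  qed
qed

text \<open>Gibbs' inequality against the uniform distribution on \<open>N\<close> points.\<close>

lemma sum_entr_le:
  fixes r :: "'b \<Rightarrow> real"
  assumes fS: "finite S" and N: "real (card S) \<le> N" and r: "\<And>i. i \<in> S \<Longrightarrow> 0 \<le> r i"
    and t: "(\<Sum>i\<in>S. r i) = t" "t > 0"
  shows "(\<Sum>i\<in>S. entr (r i)) \<le> t * ln (N / t)"
proof -
  have "S \<noteq> {}" using t by auto
  then have "card S > 0" using fS by (simp add: card_gt_0_iff)
  then have N0: "N > 0" using N by linarith
  have each: "entr (r i) - r i * ln (N / t) \<le> t / N - r i" if i: "i \<in> S" for i
  proof (cases "r i = 0")
    case True
    then show ?thesis using N0 t by simp
  next
    case False
    then have ri: "r i > 0" using r[OF i] by simp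
    have "entr (r i) - r i * ln (N / t) = r i * ln (t / (N * r i))"
      unfolding entr_def using ri N0 t by (simp add: ln_div ln_mult_pos algebra_simps)
    also have "\<dots> \<le> r i * (t / (N * r i) - 1)"
      using ri N0 t by (intro mult_left_mono ln_le_minus_one) auto
    also have "\<dots> = t / N - r i" using ri N0 by (simp add: field_simps)
    finally show ?thesis .
  qed
  have "(\<Sum>i\<in>S. entr (r i) - r i * ln (N / t)) \<le> (\<Sum>i\<in>S. t / N - r i)"
    using each by (rule sum_mono)
  also have "\<dots> = real (card S) * t / N - t" using t by (simp add: sum_subtractf)
  also have "\<dots> \<le> N * t / N - t" using N t N0 by (intro diff_right_mono divide_right_mono mult_right_mono) auto
  also have "\<dots> = 0" using N0 by simp
  finally show ?thesis using t by (simp add: sum_subtractf sum_distrib_right[symmetric])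
qed

lemma mult_ln_div_mono:
  fixes s t N :: real
  assumes "0 < s" "s \<le> t" "exp 1 * t \<le> N"
  shows "s * ln (N / s) \<le> t * ln (N / t)"
proof -
  have t0: "0 < t" using assms by linarith
  have N0: "0 < N" using assms(3) t0 by (smt (verit) exp_gt_zero mult_pos_pos)
  have "exp 1 \<le> N / t" using assms t0 by (simp add: field_simps)
  then have L1: "1 \<le> ln (N / t)" using t0 N0 by (subst ln_ge_iff) auto
  have "ln (t / s) \<le> t / s - 1" using assms t0 by (intro ln_le_minus_one) auto
  then have L2: "1 - t / s \<le> ln (s / t)" using assms t0 by (simp add: ln_div)
  have "t * ln (N / t) - s * ln (N / s) = (t - s) * ln (N / t) + s * ln (s / t)"
    using assms t0 N0 by (simp add: ln_div algebra_simps)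
  also have "\<dots> \<ge> (t - s) * 1 + s * (1 - t / s)"
    using L1 L2 assms by (intro add_mono mult_left_mono) auto
  also have "(t - s) * 1 + s * (1 - t / s) = 0" using assms by (simp add: field_simps)
  finally show ?thesis by simp
qed

text \<open>The continuity bound of Cover and Thomas (Theorem 17.3.3) for \<open>n + 1\<close> symbols.\<close>

lemma sum_entr_diff_le:
  fixes p q :: "nat \<Rightarrow> real"
  assumes pq: "\<And>k. k \<le> n \<Longrightarrow> 0 \<le> p k \<and> p k \<le> 1 \<and> 0 \<le> q k \<and> q k \<le> 1"
    and d: "(\<Sum>k\<le>n. \<bar>p k - q k\<bar>) \<le> a" and a: "0 < a" "a \<le> 1/2" and n: "1 \<le> n"
  shows "\<bar>(\<Sum>k\<le>n. entr (q k)) - (\<Sum>k\<le>n. entr (p k))\<bar> \<le> a * ln ((real n + 1) / a)"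
proof -
  define t where "t = (\<Sum>k\<le>n. \<bar>p k - q k\<bar>)"
  have single: "\<bar>p k - q k\<bar> \<le> t" if "k \<le> n" for k
    unfolding t_def using that by (intro member_le_sum) auto
  have "\<bar>(\<Sum>k\<le>n. entr (q k)) - (\<Sum>k\<le>n. entr (p k))\<bar> \<le> (\<Sum>k\<le>n. \<bar>entr (q k) - entr (p k)\<bar>)"
    by (simp add: sum_subtractf[symmetric] sum_abs)
  also have "\<dots> \<le> (\<Sum>k\<le>n. entr \<bar>p k - q k\<bar>)"
  proof (rule sum_mono)
    fix k assume "k \<in> {..n}"
    then show "\<bar>entr (q k) - entr (p k)\<bar> \<le> entr \<bar>p k - q k\<bar>"
      using abs_entr_diff_le[of "q k" "p k"] pq[of k] single[of k] d a
      by (simp add: t_def abs_minus_commute)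
  qed
  also have "\<dots> \<le> a * ln ((real n + 1) / a)"
  proof (cases "t = 0")
    case True
    then have "\<bar>p k - q k\<bar> = 0" if "k \<le> n" for k using single[OF that] by simp
    then have "(\<Sum>k\<le>n. entr \<bar>p k - q k\<bar>) = 0" by simp
    moreover have "0 \<le> a * ln ((real n + 1) / a)" using a by (intro mult_nonneg_nonneg) auto
    ultimately show ?thesis by simp
  next
    case False
    then have t0: "t > 0" unfolding t_def by (simp add: sum_nonneg order_le_neq_trans)
    have "(\<Sum>k\<le>n. entr \<bar>p k - q k\<bar>) \<le> t * ln ((real n + 1) / t)"
      by (rule sum_entr_le) (use t0 in \<open>auto simp: t_def\<close>)
    also have "\<dots> \<le> a * ln ((real n + 1) / a)"
    proof (rule mult_ln_div_mono[OF t0])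
      show "t \<le> a" using d unfolding t_def .
      have "exp 1 * a \<le> 3 * (1/2)" using e_less_272 a by (intro mult_mono) auto
      then show "exp 1 * a \<le> real n + 1" using n by simp
    qed
    finally show ?thesis .
  qed
  finally show ?thesis .
qed

lemma entr_le_suminf_entr:
  assumes q: "q sums t" "\<And>i. 0 < q i" and s: "summable (\<lambda>i. entr (q i))"
  shows "entr t \<le> (\<Sum>i. entr (q i))"
proof -
  have "(\<lambda>i. - (q i * ln t)) sums entr t"
    unfolding entr_def using sums_mult2[OF q(1), of "ln t"] by (intro sums_minus) simp
  moreover have "- (q i * ln t) \<le> entr (q i)" for i
  proof -
    have "q i \<le> t" using sum_le_suminf[OF sums_summable[OF q(1)], of "{i}"] q
      by (simp add: less_imp_le sums_unique[symmetric])
    then show ?thesis unfolding entr_def using q(2)[of i] by (simp add: mult_left_mono)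
  qed
  ultimately show ?thesis by (intro sums_le[OF _ _ summable_sums[OF s]])
qed

section \<open>The entropy of the Poisson tail\<close>

lemma neg_ln_pois_le:
  assumes l: "l > 0"
  shows "- ln (pois l k) \<le> l + real k * real k / l - real k"
proof (cases "k = 0")
  case True
  then show ?thesis by (simp add: pois_0)
next
  case False
  then have k: "real k > 0" by simp
  have "ln (fact k) \<le> ln (real k ^ k)"
    using fact_le_power[of k, where 'a = real] k by (subst ln_le_cancel_iff) auto
  then have "ln (fact k) \<le> real k * ln (real k)" by (simp add: ln_realpow)
  moreover have "ln (real k / l) \<le> real k / l - 1" using k l by (intro ln_le_minus_one) auto
  then have "real k * (ln (real k) - ln l) \<le> real k * (real k / l - 1)"
    using k l by (intro mult_left_mono) (auto simp: ln_div)
  moreover have "ln (pois l k) = - l + real k * ln l - ln (fact k)"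
    unfolding poisson_pmf_fun_def using l by (simp add: ln_mult ln_div ln_realpow)
  ultimately show ?thesis by (simp add: algebra_simps)
qed

lemma entr_pois_le:
  assumes l: "l > 0"
  shows "entr (pois l k) \<le> pois l k * (l + real k * real k / l - real k)"
  unfolding entr_def using mult_left_mono[OF neg_ln_pois_le[OF l, of k]] pois_pos[OF l, of k] by simp

text \<open>The bound of \<open>entr_pois_le\<close> rewritten as a combination of shifted masses, which makes its
  tail sums explicit.\<close>

lemma pois_quadratic_weight:
  assumes l: "l > 0"
  shows "pois l (Suc (Suc k)) * (l + real (Suc (Suc k)) * real (Suc (Suc k)) / l - real (Suc (Suc k)))
    = l * pois l (Suc (Suc k)) + l * pois l k + (1 - l) * pois l (Suc k)"
proof -
  have e1: "pois l (Suc (Suc k)) = l / real (Suc (Suc k)) * pois l (Suc k)" by (rule pois_Suc)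
  have "pois l (Suc (Suc k)) * (real (Suc (Suc k)) * real (Suc (Suc k)) / l)
      = pois l (Suc k) * real (Suc (Suc k))"
  proof -
    have "\<And>r p. r > 0 \<Longrightarrow> l / r * p * (r * r / l) = p * r" using l by (simp add: field_simps)
    then show ?thesis unfolding e1 by (metis of_nat_0_less_iff zero_less_Suc)
  qed
  also have "\<dots> = l * pois l k + pois l (Suc k)"
    using Suc_mult_pois_Suc[of k l] by (simp add: algebra_simps)
  finally have "pois l (Suc (Suc k)) * (real (Suc (Suc k)) * real (Suc (Suc k)) / l)
      = l * pois l k + pois l (Suc k)" .
  moreover have "pois l (Suc (Suc k)) * real (Suc (Suc k)) = l * pois l (Suc k)"
    using Suc_mult_pois_Suc[of "Suc k" l] by (simp add: mult.commute)
  ultimately show ?thesis by (simp add: algebra_simps)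
qed

lemma pois_tail_chernoff:
  assumes l: "l > 0" and N: "l \<le> real N" "1 \<le> N"
  shows "(\<Sum>i. pois l (i + N)) \<le> exp (- (l + real N * ln (real N / (l * exp 1))))"
proof -
  define c where "c = real N / l"
  have c1: "1 \<le> c" unfolding c_def using N l by simp
  have "(\<lambda>j. real N ^ j / fact j) sums exp (real N)"
    using exp_converges[of "real N"] by (simp add: divide_inverse scaleR_conv_of_real mult.commute)
  from sums_mult[OF this, of "exp (- l)"]
  have "(\<lambda>j. pois l j * c ^ j) sums (exp (- l) * exp (real N))"
    unfolding poisson_pmf_fun_def c_def using l by (simp add: power_divide field_simps)
  from sums_divide[OF sums_split_initial_segment[OF this, of N], of "c ^ N"]
  have S: "(\<lambda>i. pois l (i + N) * c ^ i)
      sums ((exp (- l) * exp (real N) - (\<Sum>j<N. pois l j * c ^ j)) / c ^ N)"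
    using c1 by (simp add: power_add)
  have "(\<Sum>i. pois l (i + N)) \<le> (exp (- l) * exp (real N) - (\<Sum>j<N. pois l j * c ^ j)) / c ^ N"
  proof (rule sums_le[OF _ summable_sums S])
    show "summable (\<lambda>i. pois l (i + N))" using summable_pois summable_iff_shift by blast
    show "pois l (i + N) \<le> pois l (i + N) * c ^ i" for i
      using c1 pois_pos[OF l, of "i + N"] by (simp add: mult_le_cancel_left1)
  qed
  also have "\<dots> \<le> exp (- l) * exp (real N) / c ^ N"
  proof -
    have "0 \<le> (\<Sum>j<N. pois l j * c ^ j)"
      using pois_pos[OF l] c1 by (intro sum_nonneg) (auto simp: less_imp_le)
    then show ?thesis using c1 by (intro divide_right_mono) auto
  qed
  also have "\<dots> = exp (- (l + real N * ln (real N / (l * exp 1))))"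
  proof -
    have lnc: "real N * ln (real N / (l * exp 1)) = real N * ln c - real N"
      unfolding c_def using N l by (simp add: ln_div ln_mult_pos algebra_simps)
    have "exp (real N * ln c) = c ^ N" using c1 by (simp add: exp_of_nat_mult[symmetric] ln_realpow[symmetric])
    then show ?thesis unfolding lnc using c1 by (simp add: exp_add exp_diff exp_minus field_simps)
  qed
  finally show ?thesis .
qed

lemma
  assumes l: "l > 0" and lm: "l \<le> real m - 1"
  shows summable_entr_pois_tail: "summable (\<lambda>i. entr (pois l (i + Suc m)))"
    and suminf_entr_pois_tail_le:
      "(\<Sum>i. entr (pois l (i + Suc m))) \<le> 2 * l * exp (- (l + (real m - 1) * ln ((real m - 1) / (l * exp 1))))"
proof -
  obtain n where mn: "m = Suc (Suc n)" using lm l by (cases m; cases "m - 1") auto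
  define T where "T k = 1 - pois_cdf l k" for k
  have s: "(\<lambda>i. pois l (i + Suc k)) sums T k" for k unfolding T_def by (rule pois_tail_sums)
  define g where "g i = l * pois l (i + Suc (Suc (Suc n))) + l * pois l (i + Suc n)
      + (1 - l) * pois l (i + Suc (Suc n))" for i
  have sg: "g sums (l * T (Suc (Suc n)) + l * T n + (1 - l) * T (Suc n))"
    unfolding g_def by (intro sums_add sums_mult s[of "Suc (Suc n)"] s[of n] s[of "Suc n"])
  have le: "entr (pois l (i + Suc m)) \<le> g i" for i
  proof -
    let ?k = "Suc (Suc (i + Suc n))"
    have "entr (pois l (i + Suc m)) \<le> pois l ?k * (l + real ?k * real ?k / l - real ?k)"
      using entr_pois_le[OF l, of "i + Suc m"] mn by (simp add: add.commute add.left_commute)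
    also have "\<dots> = g i"
      unfolding pois_quadratic_weight[OF l] g_def by (simp add: add.commute add.left_commute)
    finally show ?thesis .
  qed
  have "0 \<le> entr (pois l (i + Suc m))" for i
    using entr_nonneg[OF less_imp_le[OF pois_pos[OF l]] pois_le_1[OF l]] .
  then show sum: "summable (\<lambda>i. entr (pois l (i + Suc m)))"
    using le by (intro summable_comparison_test'[OF sums_summable[OF sg], of 0]) simp
  have "(\<Sum>i. entr (pois l (i + Suc m))) \<le> l * T (Suc (Suc n)) + l * T n + (1 - l) * T (Suc n)"
    by (rule sums_le[OF le summable_sums[OF sum] sg])
  also have "\<dots> = l * T n + T (Suc n) - l * pois l (Suc (Suc n))"
    unfolding T_def by (simp add: pois_cdf_Suc algebra_simps)
  also have "\<dots> \<le> l * T n + T (Suc n)" using pois_pos[OF l] l by (simp add: less_imp_le)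
  also have "T (Suc n) \<le> l / real m * T n" unfolding T_def mn by (rule pois_tail_Suc_le[OF l])
  also have "\<dots> \<le> l * T n"
    using l mn pois_cdf_le_1[OF l] unfolding T_def
    by (intro mult_right_mono) (auto simp: divide_le_eq mult_le_cancel_left1)
  also have "T n = (\<Sum>i. pois l (i + Suc n))" using sums_unique[OF s[of n]] .
  also have "\<dots> \<le> exp (- (l + real (Suc n) * ln (real (Suc n) / (l * exp 1))))"
    by (rule pois_tail_chernoff[OF l]) (use lm mn in auto)
  finally show "(\<Sum>i. entr (pois l (i + Suc m)))
      \<le> 2 * l * exp (- (l + (real m - 1) * ln ((real m - 1) / (l * exp 1))))"
    using mn l by (simp add: algebra_simps)
qed

lemma nat_entropy_eq_sum:
  assumes "\<And>k. m < k \<Longrightarrow> f k = 0"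
  shows "nat_entropy f = (\<Sum>k\<le>m. entr (f k))"
proof -
  have "(\<Sum>k. f k * ln (f k)) = (\<Sum>k\<le>m. f k * ln (f k))"
    by (rule suminf_finite) (use assms in auto)
  then show ?thesis unfolding nat_entropy_def entr_def by (simp add: sum_negf)
qed

lemma nat_entropy_split:
  assumes "summable (\<lambda>k. entr (f k))"
  shows "nat_entropy f = (\<Sum>k\<le>m. entr (f k)) + (\<Sum>i. entr (f (i + Suc m)))"
proof -
  have "summable (\<lambda>k. f k * ln (f k))"
    using summable_minus[OF assms] unfolding entr_def by simp
  then have "nat_entropy f = (\<Sum>k. entr (f k))"
    unfolding nat_entropy_def entr_def by (simp add: suminf_minus)
  also have "\<dots> = (\<Sum>i. entr (f (i + Suc m))) + (\<Sum>k<Suc m. entr (f k))"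
    by (rule suminf_split_initial_segment[OF assms])
  finally show ?thesis by (simp add: lessThan_Suc_atMost)
qed

text \<open>The Poisson law is lumped onto the \<open>m + 2\<close> symbols \<open>0, \<dots>, m, {k. k > m}\<close>; lumping its
  tail changes its entropy by at most the entropy of the tail atoms.\<close>

lemma abs_nat_entropy_pois_diff_le:
  fixes P :: "nat \<Rightarrow> real"
  assumes l: "l > 0" "l \<le> real m - 1"
    and P: "\<And>k. 0 \<le> P k \<and> P k \<le> 1" "\<And>k. m < k \<Longrightarrow> P k = 0"
    and a: "(\<Sum>k\<le>m. \<bar>P k - pois l k\<bar>) + (1 - pois_cdf l m) \<le> a" "a \<le> 1/2"
  shows "\<bar>nat_entropy (pois l) - nat_entropy P\<bar>
    \<le> a * ln ((real m + 2) / a) + 2 * l * exp (- (l + (real m - 1) * ln ((real m - 1) / (l * exp 1))))"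
proof -
  define \<tau> where "\<tau> = 1 - pois_cdf l m"
  define tail where "tail = (\<Sum>i. entr (pois l (i + Suc m)))"
  have \<tau>: "0 < \<tau>" "\<tau> \<le> 1" unfolding \<tau>_def using pois_cdf_less_1[OF l(1)] pois_cdf_nonneg[OF l(1)] by auto
  have "0 \<le> (\<Sum>k\<le>m. \<bar>P k - pois l k\<bar>)" by simp
  then have a0: "0 < a" using a(1) \<tau> unfolding \<tau>_def by linarith
  define p' where "p' k = (if k \<le> m then P k else 0)" for k
  define q' where "q' k = (if k \<le> m then pois l k else \<tau>)" for k
  have "\<bar>(\<Sum>k\<le>Suc m. entr (q' k)) - (\<Sum>k\<le>Suc m. entr (p' k))\<bar> \<le> a * ln ((real (Suc m) + 1) / a)"
  proof (rule sum_entr_diff_le)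
    show "0 \<le> p' k \<and> p' k \<le> 1 \<and> 0 \<le> q' k \<and> q' k \<le> 1" for k
      unfolding p'_def q'_def using P(1) pois_pos[OF l(1)] pois_le_1[OF l(1)] \<tau> by (auto simp: less_imp_le)
    show "(\<Sum>k\<le>Suc m. \<bar>p' k - q' k\<bar>) \<le> a"
      unfolding p'_def q'_def using a(1) \<tau> by (simp add: atMost_Suc \<tau>_def)
  qed (use a0 a(2) in auto)
  moreover have "(\<Sum>k\<le>Suc m. entr (q' k)) = (\<Sum>k\<le>m. entr (pois l k)) + entr \<tau>"
    unfolding q'_def by (simp add: atMost_Suc)
  moreover have "(\<Sum>k\<le>Suc m. entr (p' k)) = nat_entropy P"
    using nat_entropy_eq_sum[of m P] P(2) by (simp add: p'_def atMost_Suc)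
  moreover have "nat_entropy (pois l) = (\<Sum>k\<le>m. entr (pois l k)) + tail"
    unfolding tail_def
  proof (rule nat_entropy_split)
    show "summable (\<lambda>k. entr (pois l k))"
      using summable_entr_pois_tail[OF l] by (subst summable_iff_shift[symmetric, of _ "Suc m"]) simp
  qed
  moreover have "entr \<tau> \<le> tail"
    unfolding tail_def \<tau>_def
    using entr_le_suminf_entr[OF pois_tail_sums pois_pos[OF l(1)] summable_entr_pois_tail[OF l]] .
  moreover have "0 \<le> entr \<tau>" using entr_nonneg \<tau> by simp
  moreover have "tail \<le> 2 * l * exp (- (l + (real m - 1) * ln ((real m - 1) / (l * exp 1))))"
    unfolding tail_def by (rule suminf_entr_pois_tail_le[OF l])
  ultimately show ?thesis by (simp add: add.commute abs_le_iff)
qed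

lemma sum_abs_diff_eq_excess:
  fixes P Q :: "nat \<Rightarrow> real"
  assumes "(\<Sum>k\<le>m. P k) = 1"
  shows "(\<Sum>k\<le>m. \<bar>P k - Q k\<bar>) + (1 - (\<Sum>k\<le>m. Q k))
    = 2 * ((\<Sum>k\<in>{k \<in> {..m}. Q k < P k}. P k) - (\<Sum>k\<in>{k \<in> {..m}. Q k < P k}. Q k))"
proof -
  have "(\<Sum>k\<le>m. \<bar>P k - Q k\<bar>) = (\<Sum>k\<le>m. 2 * (if Q k < P k then P k - Q k else 0) - (P k - Q k))"
    by (intro sum.cong) auto
  also have "\<dots> = 2 * (\<Sum>k\<le>m. if Q k < P k then P k - Q k else 0) - ((\<Sum>k\<le>m. P k) - (\<Sum>k\<le>m. Q k))"
    by (simp add: sum_subtractf sum_distrib_left)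
  also have "(\<Sum>k\<le>m. if Q k < P k then P k - Q k else 0)
      = (\<Sum>k\<in>{k \<in> {..m}. Q k < P k}. P k) - (\<Sum>k\<in>{k \<in> {..m}. Q k < P k}. Q k)"
    by (simp add: sum.inter_filter[symmetric] sum_subtractf)
  finally show ?thesis using assms by simp
qed

section \<open>Sums of dependent indicators\<close>

lemma abs_integral_le_integral:
  fixes f g :: "'a \<Rightarrow> real"
  assumes "integrable M f" "integrable M g" "\<And>x. x \<in> space M \<Longrightarrow> \<bar>f x\<bar> \<le> g x"
  shows "\<bar>integral\<^sup>L M f\<bar> \<le> integral\<^sup>L M g"
proof -
  have "\<bar>integral\<^sup>L M f\<bar> \<le> integral\<^sup>L M (\<lambda>x. \<bar>f x\<bar>)"
    using integral_norm_bound[of M f] by simp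
  also have "\<dots> \<le> integral\<^sup>L M g" using assms by (intro integral_mono) auto
  finally show ?thesis .
qed

locale bernoulli_family = prob_space M for M :: "'a measure" +
  fixes I :: "'i set" and X :: "'i \<Rightarrow> 'a \<Rightarrow> real"
  assumes finite_I: "finite I"
    and measurable_X: "\<And>\<alpha>. \<alpha> \<in> I \<Longrightarrow> X \<alpha> \<in> borel_measurable M"
    and X_01: "\<And>\<alpha> x. \<alpha> \<in> I \<Longrightarrow> x \<in> space M \<Longrightarrow> X \<alpha> x \<in> {0, 1}"
begin

definition mean :: "'i \<Rightarrow> real" where
  "mean \<alpha> = measure M {x \<in> space M. X \<alpha> x = 1}"

definition ones :: "'i set \<Rightarrow> 'a \<Rightarrow> nat" where
  "ones S x = card {\<alpha> \<in> S. X \<alpha> x = 1}"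

lemma mean_nonneg: "0 \<le> mean \<alpha>"
  unfolding mean_def by simp

lemma sum_X_eq_ones:
  assumes S: "S \<subseteq> I" and x: "x \<in> space M"
  shows "(\<Sum>\<alpha>\<in>S. X \<alpha> x) = real (ones S x)"
proof -
  have "(\<Sum>\<alpha>\<in>S. X \<alpha> x) = (\<Sum>\<alpha>\<in>S. if X \<alpha> x = 1 then 1 else 0)"
    using X_01 S x by (intro sum.cong) auto
  also have "\<dots> = real (ones S x)"
    using finite_subset[OF S finite_I] by (simp add: sum.If_cases Int_def conj_commute ones_def)
  finally show ?thesis .
qed

lemma ones_le_card: "S \<subseteq> I \<Longrightarrow> ones S x \<le> card I"
  unfolding ones_def using finite_I by (intro card_mono) auto

lemma ones_split:
  assumes "N \<subseteq> I"
  shows "ones I x = ones (I - N) x + ones N x"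
proof -
  have "{\<beta> \<in> I. X \<beta> x = 1} = {\<beta> \<in> I - N. X \<beta> x = 1} \<union> {\<beta> \<in> N. X \<beta> x = 1}"
    using assms by auto
  then show ?thesis
    unfolding ones_def using assms finite_I by (subst card_Un_disjoint[symmetric]) (auto intro: finite_subset)
qed

lemma ones_remove:
  assumes "\<alpha> \<in> N" "N \<subseteq> I" "X \<alpha> x = 1"
  shows "ones N x = ones (N - {\<alpha>}) x + 1"
proof -
  have "{\<beta> \<in> N. X \<beta> x = 1} = insert \<alpha> {\<beta> \<in> N - {\<alpha>}. X \<beta> x = 1}" using assms by auto
  then show ?thesis unfolding ones_def using assms finite_I by (simp add: finite_subset)
qed

lemma measurable_ones:
  assumes "S \<subseteq> I" "space N = space M" "\<And>\<beta>. \<beta> \<in> S \<Longrightarrow> X \<beta> \<in> borel_measurable N"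
  shows "(\<lambda>x. f (ones S x) :: real) \<in> borel_measurable N"
proof -
  have "(\<lambda>x. \<lfloor>\<Sum>\<beta>\<in>S. X \<beta> x\<rfloor>) \<in> measurable N (count_space UNIV)"
    using assms(3) by measurable
  then have "(\<lambda>x. f (nat \<lfloor>\<Sum>\<beta>\<in>S. X \<beta> x\<rfloor>)) \<in> borel_measurable N"
    by (rule measurable_compose[of _ _ _ "\<lambda>i. f (nat i)"]) simp
  moreover have "f (nat \<lfloor>\<Sum>\<beta>\<in>S. X \<beta> x\<rfloor>) = f (ones S x)" if "x \<in> space N" for x
    using sum_X_eq_ones[OF assms(1)] that assms(2) by simp
  ultimately show ?thesis by (rule measurable_cong[THEN iffD1, rotated])
qed

lemma integrable_bounded:
  fixes C :: real
  assumes "f \<in> borel_measurable M" "\<And>x. x \<in> space M \<Longrightarrow> \<bar>f x\<bar> \<le> C"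
  shows "integrable M f"
  using assms by (intro integrable_const_bound[where B = C]) (auto intro: AE_I2)

lemma abs_X_le_1: "\<alpha> \<in> I \<Longrightarrow> x \<in> space M \<Longrightarrow> \<bar>X \<alpha> x\<bar> \<le> 1"
  using X_01 by fastforce

lemma integrable_X: "\<alpha> \<in> I \<Longrightarrow> integrable M (X \<alpha>)"
  using measurable_X abs_X_le_1 by (intro integrable_bounded) auto

lemma integrable_X_mult: "\<alpha> \<in> I \<Longrightarrow> \<beta> \<in> I \<Longrightarrow> integrable M (\<lambda>x. X \<alpha> x * X \<beta> x)"
  using measurable_X abs_X_le_1 by (intro integrable_bounded[where C = 1]) (auto simp: abs_mult intro: mult_le_one)

lemma integral_X: "\<alpha> \<in> I \<Longrightarrow> integral\<^sup>L M (X \<alpha>) = mean \<alpha>"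
proof -
  assume "\<alpha> \<in> I"
  then have "integral\<^sup>L M (X \<alpha>) = integral\<^sup>L M (indicator {x \<in> space M. X \<alpha> x = 1})"
    using X_01 by (intro Bochner_Integration.integral_cong) (auto simp: indicator_def)
  then show ?thesis unfolding mean_def by (simp add: Int_absorb2 Collect_conj_eq Int_commute)
qed

lemma
  assumes "S \<subseteq> I"
  shows integrable_ones: "integrable M (\<lambda>x. real (ones S x))"
    and integral_ones: "integral\<^sup>L M (\<lambda>x. real (ones S x)) = (\<Sum>\<beta>\<in>S. mean \<beta>)"
proof -
  have eq: "integral\<^sup>L M (\<lambda>x. real (ones S x)) = integral\<^sup>L M (\<lambda>x. \<Sum>\<beta>\<in>S. X \<beta> x)"
    using sum_X_eq_ones[OF assms] by (intro Bochner_Integration.integral_cong) simp_all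
  show "integrable M (\<lambda>x. real (ones S x))"
    using measurable_ones[OF assms refl] measurable_X ones_le_card[OF assms] assms
    by (intro integrable_bounded[where C = "real (card I)"]) auto
  show "integral\<^sup>L M (\<lambda>x. real (ones S x)) = (\<Sum>\<beta>\<in>S. mean \<beta>)"
    unfolding eq using integrable_X integral_X assms
    by (subst Bochner_Integration.integral_sum) (auto intro: sum.cong)
qed

lemma gen_sigma_generator_subset:
  "{X j -` A \<inter> space M | j A. j \<in> J \<and> A \<in> sets borel} \<subseteq> Pow (space M)"
  by auto

lemma space_gen_sigma: "space (gen_sigma M J X) = space M"
  unfolding gen_sigma_def using gen_sigma_generator_subset by (simp add: space_measure_of)

lemma measurable_X_gen_sigma: "\<beta> \<in> J \<Longrightarrow> X \<beta> \<in> borel_measurable (gen_sigma M J X)"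
proof (rule measurableI)
  fix A :: "real set" assume "\<beta> \<in> J" "A \<in> sets borel"
  then have "X \<beta> -` A \<inter> space M \<in> {X j -` A \<inter> space M | j A. j \<in> J \<and> A \<in> sets borel}" by blast
  then show "X \<beta> -` A \<inter> space (gen_sigma M J X) \<in> sets (gen_sigma M J X)"
    unfolding gen_sigma_def space_gen_sigma[unfolded gen_sigma_def]
    using gen_sigma_generator_subset by (simp add: sets_measure_of)
qed simp

lemma sigma_finite_subalgebra_gen_sigma:
  assumes "J \<subseteq> I"
  shows "sigma_finite_subalgebra M (gen_sigma M J X)"
proof -
  have "{X j -` A \<inter> space M | j A. j \<in> J \<and> A \<in> sets borel} \<subseteq> sets M"
    using measurable_X assms measurable_sets by blast
  then have "subalgebra M (gen_sigma M J X)"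
    unfolding subalgebra_def space_gen_sigma unfolding gen_sigma_def
    using gen_sigma_generator_subset by (simp add: sets_measure_of sigma_sets_le_sets_iff)
  then have "finite_measure_subalgebra M (gen_sigma M J X)"
    unfolding finite_measure_subalgebra_def finite_measure_subalgebra_axioms_def
    using finite_measure_axioms by simp
  then show ?thesis by (rule finite_measure_subalgebra_is_sigma_finite)
qed

lemma integrable_fun_ones:
  fixes f :: "nat \<Rightarrow> real"
  assumes "S \<subseteq> I" "\<And>k. \<bar>f k\<bar> \<le> C"
  shows "integrable M (\<lambda>x. f (ones S x))"
proof (rule integrable_bounded)
  show "(\<lambda>x. f (ones S x)) \<in> borel_measurable M" using assms(1) measurable_X by (intro measurable_ones) auto
qed (use assms(2) in auto)

lemma integrable_X_mult_fun_ones: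
  fixes f :: "nat \<Rightarrow> real"
  assumes "\<alpha> \<in> I" "S \<subseteq> I" "\<And>k. \<bar>f k\<bar> \<le> C"
  shows "integrable M (\<lambda>x. X \<alpha> x * f (ones S x))"
proof (rule integrable_bounded)
  show "(\<lambda>x. X \<alpha> x * f (ones S x)) \<in> borel_measurable M"
    using assms(1,2) measurable_X by (intro borel_measurable_times measurable_ones) auto
  show "\<bar>X \<alpha> x * f (ones S x)\<bar> \<le> 1 * C" if "x \<in> space M" for x
    unfolding abs_mult using abs_X_le_1[OF assms(1) that] assms(3) by (intro mult_mono) auto
qed

text \<open>For a neighbourhood \<open>N\<close> of \<open>\<alpha>\<close>, with \<open>W = ones I\<close> and \<open>V = ones (I - N)\<close>,
  \<open>mean \<alpha> g(W+1) - X \<alpha> g(W) = mean \<alpha> (g(W+1) - g(V+1)) - g(V+1) (X \<alpha> - mean \<alpha>) + X \<alpha> (g(V+1) - g(W))\<close>.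
  The outer terms are controlled by the Lipschitz bound on \<open>g\<close>, the middle one by conditioning
  on the indicators outside \<open>N\<close>.\<close>

lemma
  assumes N: "N \<subseteq> I"
    and g: "\<And>k. \<bar>g k\<bar> \<le> C" and lip: "\<And>i j. 1 \<le> i \<Longrightarrow> i \<le> j \<Longrightarrow> \<bar>g j - g i\<bar> \<le> L * real (j - i)"
  shows integrable_shift_term: "integrable M (\<lambda>x. g (ones I x + 1) - g (ones (I - N) x + 1))"
    and abs_integral_shift_term_le:
      "\<bar>integral\<^sup>L M (\<lambda>x. g (ones I x + 1) - g (ones (I - N) x + 1))\<bar> \<le> L * (\<Sum>\<beta>\<in>N. mean \<beta>)"
proof -
  show int: "integrable M (\<lambda>x. g (ones I x + 1) - g (ones (I - N) x + 1))"
    using integrable_fun_ones[of I "\<lambda>k. g (k + 1)" C] integrable_fun_ones[of "I - N" "\<lambda>k. g (k + 1)" C] g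
    by (intro Bochner_Integration.integrable_diff) auto
  have "\<bar>integral\<^sup>L M (\<lambda>x. g (ones I x + 1) - g (ones (I - N) x + 1))\<bar>
      \<le> integral\<^sup>L M (\<lambda>x. L * real (ones N x))"
  proof (rule abs_integral_le_integral[OF int])
    show "integrable M (\<lambda>x. L * real (ones N x))" using integrable_ones[OF N] by simp
    show "\<bar>g (ones I x + 1) - g (ones (I - N) x + 1)\<bar> \<le> L * real (ones N x)" for x
      using lip[of "ones (I - N) x + 1" "ones I x + 1"] ones_split[OF N, of x] by simp
  qed
  then show "\<bar>integral\<^sup>L M (\<lambda>x. g (ones I x + 1) - g (ones (I - N) x + 1))\<bar> \<le> L * (\<Sum>\<beta>\<in>N. mean \<beta>)"
    using integral_ones[OF N] by simp
qed

lemma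
  assumes N: "\<alpha> \<in> N" "N \<subseteq> I"
    and g: "\<And>k. \<bar>g k\<bar> \<le> C" and lip: "\<And>i j. 1 \<le> i \<Longrightarrow> i \<le> j \<Longrightarrow> \<bar>g j - g i\<bar> \<le> L * real (j - i)"
  shows integrable_near_term: "integrable M (\<lambda>x. X \<alpha> x * (g (ones (I - N) x + 1) - g (ones I x)))"
    and abs_integral_near_term_le: "\<bar>integral\<^sup>L M (\<lambda>x. X \<alpha> x * (g (ones (I - N) x + 1) - g (ones I x)))\<bar>
    \<le> L * (\<Sum>\<beta>\<in>N - {\<alpha>}. integral\<^sup>L M (\<lambda>x. X \<alpha> x * X \<beta> x))"
proof -
  have \<alpha>: "\<alpha> \<in> I" using N by auto
  have "integrable M (\<lambda>x. X \<alpha> x * g (ones (I - N) x + 1) - X \<alpha> x * g (ones I x))"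
    using N g by (intro Bochner_Integration.integrable_diff integrable_X_mult_fun_ones[OF \<alpha>]) auto
  then show int: "integrable M (\<lambda>x. X \<alpha> x * (g (ones (I - N) x + 1) - g (ones I x)))"
    by (simp add: right_diff_distrib)
  have "\<bar>integral\<^sup>L M (\<lambda>x. X \<alpha> x * (g (ones (I - N) x + 1) - g (ones I x)))\<bar>
      \<le> integral\<^sup>L M (\<lambda>x. L * (\<Sum>\<beta>\<in>N - {\<alpha>}. X \<alpha> x * X \<beta> x))"
  proof (rule abs_integral_le_integral[OF int])
    show "integrable M (\<lambda>x. L * (\<Sum>\<beta>\<in>N - {\<alpha>}. X \<alpha> x * X \<beta> x))"
      using integrable_X_mult \<alpha> N by (intro integrable_mult_right Bochner_Integration.integrable_sum) auto
    fix x assume x: "x \<in> space M"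
    show "\<bar>X \<alpha> x * (g (ones (I - N) x + 1) - g (ones I x))\<bar> \<le> L * (\<Sum>\<beta>\<in>N - {\<alpha>}. X \<alpha> x * X \<beta> x)"
    proof (cases "X \<alpha> x = 1")
      case False
      then show ?thesis using X_01[OF \<alpha> x] by simp
    next
      case True
      have "ones I x = ones (I - N) x + 1 + ones (N - {\<alpha>}) x"
        using ones_split[OF N(2)] ones_remove[OF N True] by simp
      moreover have "(\<Sum>\<beta>\<in>N - {\<alpha>}. X \<alpha> x * X \<beta> x) = real (ones (N - {\<alpha>}) x)"
        using sum_X_eq_ones[of "N - {\<alpha>}" x] N x True by auto
      ultimately show ?thesis
        using lip[of "ones (I - N) x + 1" "ones I x"] True by (simp add: abs_minus_commute)
    qed
  qed
  also have "\<dots> = L * (\<Sum>\<beta>\<in>N - {\<alpha>}. integral\<^sup>L M (\<lambda>x. X \<alpha> x * X \<beta> x))"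
    using integrable_X_mult \<alpha> N
    by (subst integral_mult_right_zero, subst Bochner_Integration.integral_sum) auto
  finally show "\<bar>integral\<^sup>L M (\<lambda>x. X \<alpha> x * (g (ones (I - N) x + 1) - g (ones I x)))\<bar>
    \<le> L * (\<Sum>\<beta>\<in>N - {\<alpha>}. integral\<^sup>L M (\<lambda>x. X \<alpha> x * X \<beta> x))" .
qed

lemma
  assumes N: "\<alpha> \<in> N" "N \<subseteq> I" and g: "\<And>k. \<bar>g k\<bar> \<le> C"
  shows integrable_far_term: "integrable M (\<lambda>x. g (ones (I - N) x + 1) * (X \<alpha> x - mean \<alpha>))"
    and abs_integral_far_term_le: "\<bar>integral\<^sup>L M (\<lambda>x. g (ones (I - N) x + 1) * (X \<alpha> x - mean \<alpha>))\<bar>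
    \<le> C * integral\<^sup>L M (\<lambda>x. \<bar>real_cond_exp M (gen_sigma M (I - N) X) (\<lambda>y. X \<alpha> y - mean \<alpha>) x\<bar>)"
proof -
  interpret sub: sigma_finite_subalgebra M "gen_sigma M (I - N) X"
    by (rule sigma_finite_subalgebra_gen_sigma) auto
  let ?H = "\<lambda>x. g (ones (I - N) x + 1)"
  define ce where "ce = real_cond_exp M (gen_sigma M (I - N) X) (\<lambda>y. X \<alpha> y - mean \<alpha>)"
  have \<alpha>: "\<alpha> \<in> I" using N by auto
  have HG: "?H \<in> borel_measurable (gen_sigma M (I - N) X)"
    using space_gen_sigma measurable_X_gen_sigma by (intro measurable_ones) auto
  have Xm: "(\<lambda>y. X \<alpha> y - mean \<alpha>) \<in> borel_measurable M" using measurable_X[OF \<alpha>] by measurable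
  show iHX: "integrable M (\<lambda>x. ?H x * (X \<alpha> x - mean \<alpha>))"
  proof (rule integrable_bounded[where C = "C * (1 + mean \<alpha>)"])
    show "(\<lambda>x. ?H x * (X \<alpha> x - mean \<alpha>)) \<in> borel_measurable M"
      using measurable_ones[OF _ refl measurable_X, of "I - N"] Xm by measurable
    show "\<bar>?H x * (X \<alpha> x - mean \<alpha>)\<bar> \<le> C * (1 + mean \<alpha>)" if "x \<in> space M" for x
      unfolding abs_mult using g abs_X_le_1[OF \<alpha> that] mean_nonneg[of \<alpha>]
      by (intro mult_mono) (auto intro: order_trans[OF abs_ge_zero])
  qed
  have "integral\<^sup>L M (\<lambda>x. ?H x * (X \<alpha> x - mean \<alpha>)) = integral\<^sup>L M (\<lambda>x. ?H x * ce x)"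
    unfolding ce_def by (rule sub.real_cond_exp_intg(2)[OF iHX HG Xm, symmetric])
  also have "\<bar>\<dots>\<bar> \<le> integral\<^sup>L M (\<lambda>x. C * \<bar>ce x\<bar>)"
  proof (rule abs_integral_le_integral)
    show "integrable M (\<lambda>x. ?H x * ce x)"
      unfolding ce_def by (rule sub.real_cond_exp_intg(1)[OF iHX HG Xm])
    have "integrable M ce" unfolding ce_def using integrable_X[OF \<alpha>] by (intro sub.real_cond_exp_int(1)) simp
    then show "integrable M (\<lambda>x. C * \<bar>ce x\<bar>)" by (intro integrable_mult_right integrable_abs)
    show "\<bar>?H x * ce x\<bar> \<le> C * \<bar>ce x\<bar>" for x unfolding abs_mult using g by (intro mult_right_mono) auto
  qed
  finally show "\<bar>integral\<^sup>L M (\<lambda>x. g (ones (I - N) x + 1) * (X \<alpha> x - mean \<alpha>))\<bar>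
    \<le> C * integral\<^sup>L M (\<lambda>x. \<bar>real_cond_exp M (gen_sigma M (I - N) X) (\<lambda>y. X \<alpha> y - mean \<alpha>) x\<bar>)"
    unfolding ce_def by simp
qed

lemma abs_integral_stein_term_le:
  assumes N: "\<alpha> \<in> N" "N \<subseteq> I"
    and g: "\<And>k. \<bar>g k\<bar> \<le> C" and lip: "\<And>i j. 1 \<le> i \<Longrightarrow> i \<le> j \<Longrightarrow> \<bar>g j - g i\<bar> \<le> L * real (j - i)"
  shows "\<bar>integral\<^sup>L M (\<lambda>x. mean \<alpha> * g (ones I x + 1) - X \<alpha> x * g (ones I x))\<bar>
    \<le> L * (\<Sum>\<beta>\<in>N. mean \<alpha> * mean \<beta>) + L * (\<Sum>\<beta>\<in>N - {\<alpha>}. integral\<^sup>L M (\<lambda>x. X \<alpha> x * X \<beta> x))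
      + C * integral\<^sup>L M (\<lambda>x. \<bar>real_cond_exp M (gen_sigma M (I - N) X) (\<lambda>y. X \<alpha> y - mean \<alpha>) x\<bar>)"
proof -
  let ?shift = "\<lambda>x. g (ones I x + 1) - g (ones (I - N) x + 1)"
  let ?far = "\<lambda>x. g (ones (I - N) x + 1) * (X \<alpha> x - mean \<alpha>)"
  let ?near = "\<lambda>x. X \<alpha> x * (g (ones (I - N) x + 1) - g (ones I x))"
  have "integral\<^sup>L M (\<lambda>x. mean \<alpha> * g (ones I x + 1) - X \<alpha> x * g (ones I x))
      = integral\<^sup>L M (\<lambda>x. mean \<alpha> * ?shift x - ?far x + ?near x)"
    by (rule Bochner_Integration.integral_cong) (simp_all add: algebra_simps)
  also have "\<dots> = mean \<alpha> * integral\<^sup>L M ?shift - integral\<^sup>L M ?far + integral\<^sup>L M ?near"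
    using integrable_shift_term[of N g C L, OF N(2) g lip] integrable_far_term[of \<alpha> N g C, OF N g]
      integrable_near_term[of \<alpha> N g C L, OF N g lip]
    by simp
  finally have "\<bar>integral\<^sup>L M (\<lambda>x. mean \<alpha> * g (ones I x + 1) - X \<alpha> x * g (ones I x))\<bar>
      \<le> mean \<alpha> * \<bar>integral\<^sup>L M ?shift\<bar> + \<bar>integral\<^sup>L M ?far\<bar> + \<bar>integral\<^sup>L M ?near\<bar>"
    using mean_nonneg[of \<alpha>] abs_mult[of "mean \<alpha>" "integral\<^sup>L M ?shift"] by arith
  also have "\<dots> \<le> mean \<alpha> * (L * (\<Sum>\<beta>\<in>N. mean \<beta>))
      + C * integral\<^sup>L M (\<lambda>x. \<bar>real_cond_exp M (gen_sigma M (I - N) X) (\<lambda>y. X \<alpha> y - mean \<alpha>) x\<bar>)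
      + L * (\<Sum>\<beta>\<in>N - {\<alpha>}. integral\<^sup>L M (\<lambda>x. X \<alpha> x * X \<beta> x))"
    using abs_integral_shift_term_le[of N g C L, OF N(2) g lip] abs_integral_far_term_le[of \<alpha> N g C, OF N g]
      abs_integral_near_term_le[of \<alpha> N g C L, OF N g lip] mean_nonneg[of \<alpha>]
    by (intro add_mono mult_left_mono) auto
  finally show ?thesis by (simp add: sum_distrib_left algebra_simps)
qed

lemma sets_ones_eq: "{x \<in> space M. ones I x = k} \<in> sets M"
proof -
  have "(\<lambda>x. real (ones I x)) \<in> borel_measurable M" using measurable_X by (intro measurable_ones) auto
  then have "{x \<in> space M. real (ones I x) = real k} \<in> sets M" by measurable
  then show ?thesis by simp
qed

lemma sum_measure_ones_eq:
  assumes "finite A"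
  shows "(\<Sum>k\<in>A. measure M {x \<in> space M. ones I x = k}) = integral\<^sup>L M (\<lambda>x. indicator A (ones I x))"
proof -
  have int: "integrable M (indicator {x \<in> space M. ones I x = k} :: 'a \<Rightarrow> real)" for k
    using sets_ones_eq by (intro integrable_bounded[where C = 1]) (auto simp: indicator_def)
  have "(\<Sum>k\<in>A. measure M {x \<in> space M. ones I x = k})
      = integral\<^sup>L M (\<lambda>x. \<Sum>k\<in>A. indicator {x \<in> space M. ones I x = k} x)"
    using int by (subst Bochner_Integration.integral_sum) (auto simp: Int_absorb2 Collect_conj_eq Int_commute)
  also have "\<dots> = integral\<^sup>L M (\<lambda>x. indicator A (ones I x))"
    using assms by (intro Bochner_Integration.integral_cong) (auto simp: indicator_def sum.delta)
  finally show ?thesis .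
qed

lemma sum_measure_ones: "(\<Sum>k\<le>card I. measure M {x \<in> space M. ones I x = k}) = 1"
  using ones_le_card[of I] by (simp add: sum_measure_ones_eq prob_space indicator_def)

lemma measure_ones_eq_0: "card I < k \<Longrightarrow> measure M {x \<in> space M. ones I x = k} = 0"
  using ones_le_card[of I] by (metis (mono_tags, lifting) empty_Collect_eq leD measure_empty order_refl)

theorem chen_stein:
  assumes l: "l = (\<Sum>\<alpha>\<in>I. mean \<alpha>)" "l > 0" and A: "A \<subseteq> {..card I}"
    and B: "\<And>\<alpha>. \<alpha> \<in> I \<Longrightarrow> \<alpha> \<in> B \<alpha> \<and> B \<alpha> \<subseteq> I"
  shows "\<bar>(\<Sum>k\<in>A. measure M {x \<in> space M. ones I x = k}) - sum (pois l) A\<bar>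
    \<le> (1 - exp (- l)) / l * ((\<Sum>\<alpha>\<in>I. \<Sum>\<beta>\<in>B \<alpha>. mean \<alpha> * mean \<beta>)
        + (\<Sum>\<alpha>\<in>I. \<Sum>\<beta>\<in>B \<alpha> - {\<alpha>}. integral\<^sup>L M (\<lambda>x. X \<alpha> x * X \<beta> x)))
      + min 1 (1.4 / sqrt l)
        * (\<Sum>\<alpha>\<in>I. integral\<^sup>L M (\<lambda>x. \<bar>real_cond_exp M (gen_sigma M (I - B \<alpha>) X) (\<lambda>y. X \<alpha> y - mean \<alpha>) x\<bar>))"
proof -
  define g where "g = stein_sol l A"
  define T where "T \<alpha> x = mean \<alpha> * g (ones I x + 1) - X \<alpha> x * g (ones I x)" for \<alpha> x
  have fA: "finite A" using A finite_subset by blast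
  have g: "\<bar>g k\<bar> \<le> min 1 (1.4 / sqrt l)" for k unfolding g_def by (rule abs_stein_sol_le[OF l(2) fA])
  have lip: "\<bar>g j - g i\<bar> \<le> (1 - exp (- l)) / l * real (j - i)" if "1 \<le> i" "i \<le> j" for i j
    unfolding g_def using stein_sol_lipschitz[OF l(2) A that] .
  have T: "integrable M (T \<alpha>)" if "\<alpha> \<in> I" for \<alpha>
  proof -
    have "integrable M (\<lambda>x. g (ones I x + 1))"
      by (rule integrable_fun_ones[of I "\<lambda>k. g (k + 1)"]) (use g in auto)
    moreover have "integrable M (\<lambda>x. X \<alpha> x * g (ones I x))"
      by (rule integrable_X_mult_fun_ones[OF that, of I g]) (use g in auto)
    ultimately show ?thesis unfolding T_def by (intro Bochner_Integration.integrable_diff integrable_mult_right)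
  qed
  have "indicator A (ones I x) - sum (pois l) A = (\<Sum>\<alpha>\<in>I. T \<alpha> x)" if "x \<in> space M" for x
  proof -
    have "(\<Sum>\<alpha>\<in>I. T \<alpha> x) = l * g (ones I x + 1) - (\<Sum>\<alpha>\<in>I. X \<alpha> x) * g (ones I x)"
      unfolding T_def l(1) by (simp add: sum_subtractf sum_distrib_right)
    then show ?thesis
      using stein_equation[OF l(2), of A "ones I x"] sum_X_eq_ones[OF order_refl that] by (simp add: g_def)
  qed
  then have "integral\<^sup>L M (\<lambda>x. indicator A (ones I x) - sum (pois l) A) = integral\<^sup>L M (\<lambda>x. \<Sum>\<alpha>\<in>I. T \<alpha> x)"
    by (intro Bochner_Integration.integral_cong) auto
  moreover have "integrable M (\<lambda>x. indicator A (ones I x) :: real)"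
    by (rule integrable_fun_ones[of I _ 1]) (auto simp: indicator_def)
  ultimately have "(\<Sum>k\<in>A. measure M {x \<in> space M. ones I x = k}) - sum (pois l) A
      = (\<Sum>\<alpha>\<in>I. integral\<^sup>L M (T \<alpha>))"
    unfolding sum_measure_ones_eq[OF fA] using T by (simp add: prob_space Bochner_Integration.integral_sum)
  also have "\<bar>\<dots>\<bar> \<le> (\<Sum>\<alpha>\<in>I. \<bar>integral\<^sup>L M (T \<alpha>)\<bar>)" by (rule sum_abs)
  also have "\<dots> \<le> (\<Sum>\<alpha>\<in>I. (1 - exp (- l)) / l * (\<Sum>\<beta>\<in>B \<alpha>. mean \<alpha> * mean \<beta>)
      + (1 - exp (- l)) / l * (\<Sum>\<beta>\<in>B \<alpha> - {\<alpha>}. integral\<^sup>L M (\<lambda>x. X \<alpha> x * X \<beta> x))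
      + min 1 (1.4 / sqrt l)
        * integral\<^sup>L M (\<lambda>x. \<bar>real_cond_exp M (gen_sigma M (I - B \<alpha>) X) (\<lambda>y. X \<alpha> y - mean \<alpha>) x\<bar>))"
    unfolding T_def using B g lip by (intro sum_mono abs_integral_stein_term_le) auto
  finally show ?thesis by (simp add: sum.distrib sum_distrib_left distrib_left)
qed

corollary total_variation_le:
  assumes l: "l = (\<Sum>\<alpha>\<in>I. mean \<alpha>)" "l > 0"
    and B: "\<And>\<alpha>. \<alpha> \<in> I \<Longrightarrow> \<alpha> \<in> B \<alpha> \<and> B \<alpha> \<subseteq> I"
  shows "(\<Sum>k\<le>card I. \<bar>measure M {x \<in> space M. ones I x = k} - pois l k\<bar>) + (1 - pois_cdf l (card I))
    \<le> 2 * ((1 - exp (- l)) / l * ((\<Sum>\<alpha>\<in>I. \<Sum>\<beta>\<in>B \<alpha>. mean \<alpha> * mean \<beta>)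
        + (\<Sum>\<alpha>\<in>I. \<Sum>\<beta>\<in>B \<alpha> - {\<alpha>}. integral\<^sup>L M (\<lambda>x. X \<alpha> x * X \<beta> x)))
      + min 1 (1.4 / sqrt l)
        * (\<Sum>\<alpha>\<in>I. integral\<^sup>L M (\<lambda>x. \<bar>real_cond_exp M (gen_sigma M (I - B \<alpha>) X) (\<lambda>y. X \<alpha> y - mean \<alpha>) x\<bar>)))"
proof -
  define P where "P k = measure M {x \<in> space M. ones I x = k}" for k
  define A where "A = {k \<in> {..card I}. pois l k < P k}"
  have "(\<Sum>k\<le>card I. \<bar>P k - pois l k\<bar>) + (1 - pois_cdf l (card I))
      = 2 * ((\<Sum>k\<in>A. P k) - sum (pois l) A)"
    unfolding pois_cdf_def A_def P_def by (rule sum_abs_diff_eq_excess[OF sum_measure_ones])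
  moreover have "A \<subseteq> {..card I}" unfolding A_def by auto
  ultimately show ?thesis using chen_stein[OF l _ B, of A] unfolding P_def by (simp add: abs_le_iff)
qed

end

text \<open>The tail bound proved here is sharper than the paper's \<open>b(\<lambda>)\<close>.\<close>

lemma two_mult_le_tail_factor:
  fixes l :: real
  assumes "l > 0"
  shows "2 * l \<le> max (l * ln (exp 1 / l)) 0 + l ^ 2 + (6 * ln (2 * pi) + 1) / 12"
proof -
  have "2 * l - l ^ 2 = l * (1 - (l - 1))" by (simp add: power2_eq_square algebra_simps)
  also have "\<dots> \<le> l * (1 - ln l)" using ln_le_minus_one[OF assms] assms by (intro mult_left_mono) auto
  also have "\<dots> = l * ln (exp 1 / l)" using assms by (simp add: ln_div)
  finally have "2 * l - l ^ 2 \<le> l * ln (exp 1 / l)" .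
  moreover have "0 \<le> (6 * ln (2 * pi) + 1) / 12" using pi_gt3 by simp
  ultimately show ?thesis using max.cobounded1[of "l * ln (exp 1 / l)" 0] by linarith
qed

theorem theorem5:
  fixes M :: "'a measure" and I :: "'i set" and X :: "'i \<Rightarrow> 'a \<Rightarrow> real"
    and B :: "'i \<Rightarrow> 'i set"
    and m :: nat and p :: "'i \<Rightarrow> real" and W :: "'a \<Rightarrow> real"
    and lam b1 b2 b3 a b HW HZ :: real
  assumes "prob_space M"
    and "finite I"
    and "\<And>\<alpha>. \<alpha> \<in> I \<Longrightarrow> X \<alpha> \<in> borel_measurable M"
    and "\<And>\<alpha> x. \<alpha> \<in> I \<Longrightarrow> x \<in> space M \<Longrightarrow> X \<alpha> x \<in> {0, 1}"
    and "\<And>\<alpha>. \<alpha> \<in> I \<Longrightarrow> measure M {x \<in> space M. X \<alpha> x = 1} > 0"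
    and "\<And>\<alpha>. \<alpha> \<in> I \<Longrightarrow> \<alpha> \<in> B \<alpha> \<and> B \<alpha> \<subseteq> I"
  assumes "m = card I"
    and "p = (\<lambda>\<alpha>. measure M {x \<in> space M. X \<alpha> x = 1})"
    and "W = (\<lambda>x. \<Sum>\<alpha>\<in>I. X \<alpha> x)"
    and "lam = (\<Sum>\<alpha>\<in>I. p \<alpha>)"
    and "b1 = (\<Sum>\<alpha>\<in>I. \<Sum>\<beta>\<in>B \<alpha>. p \<alpha> * p \<beta>)"
    and "b2 = (\<Sum>\<alpha>\<in>I. \<Sum>\<beta>\<in>B \<alpha> - {\<alpha>}. integral\<^sup>L M (\<lambda>x. X \<alpha> x * X \<beta> x))"
    and "b3 = (\<Sum>\<alpha>\<in>I. integral\<^sup>L M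
              (\<lambda>x. \<bar>real_cond_exp M (gen_sigma M (I - B \<alpha>) X) (\<lambda>y. X \<alpha> y - p \<alpha>) x\<bar>))"
    and "a = 2 * ((b1 + b2) * ((1 - exp (- lam)) / lam) + b3 * min 1 (1.4 / sqrt lam))"
    and "b = (max (lam * ln (exp 1 / lam)) 0 + lam ^ 2 + (6 * ln (2 * pi) + 1) / 12)
              * exp (- (lam + (real m - 1) * ln ((real m - 1) / (lam * exp 1))))"
    and "HW = nat_entropy (\<lambda>k. measure M {x \<in> space M. W x = real k})"
    and "HZ = nat_entropy (poisson_pmf_fun lam)"
  assumes "a \<le> 1 / 2" and "lam \<le> real m - 1"
  shows "\<bar>HZ - HW\<bar> \<le> a * ln ((real m + 2) / a) + b"
proof -
  interpret bernoulli_family M I X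
    using assms(1-4) by (simp add: bernoulli_family_def bernoulli_family_axioms_def)
  have p: "p = mean" unfolding assms(8) mean_def ..
  have W: "{x \<in> space M. W x = real k} = {x \<in> space M. ones I x = k}" for k
    unfolding assms(9) using sum_X_eq_ones[OF order_refl] by auto
  have "0 < real m" using assms(19) mean_nonneg unfolding assms(10) p by (smt (verit) sum_nonneg)
  then have lam: "0 < lam" unfolding assms(10) using assms(2,5,7) by (intro sum_pos) (auto simp: p mean_def)
  have "(\<Sum>k\<le>m. \<bar>measure M {x \<in> space M. ones I x = k} - pois lam k\<bar>) + (1 - pois_cdf lam m) \<le> a"
    using total_variation_le[OF assms(10)[unfolded p] lam assms(6)]
    unfolding assms(7,11-14) p by (simp add: algebra_simps)
  from abs_nat_entropy_pois_diff_le[OF lam assms(19) _ _ this assms(18)]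
  have "\<bar>HZ - HW\<bar> \<le> a * ln ((real m + 2) / a)
      + 2 * lam * exp (- (lam + (real m - 1) * ln ((real m - 1) / (lam * exp 1))))"
    unfolding assms(16,17) W using measure_ones_eq_0 assms(7) by simp
  also have "\<dots> \<le> a * ln ((real m + 2) / a) + b"
    unfolding assms(15) using two_mult_le_tail_factor[OF lam] by (intro add_left_mono mult_right_mono) auto
  finally show ?thesis .
qed

end
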